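(* Let $(\Omega_1,\dots,\Omega_n)$ be the unique nonempty compact solution of a graph-directed iterated function system (GIFS) on $\mathbb{X}=\mathbb{R}^r\times\mathbb{C}^s\times\mathbb{Q}_{\mathfrak{p}_1}\times\cdots\times\mathbb{Q}_{\mathfrak{p}_k}$, as described below. If $\nu^{(q)}(E^\infty)<\infty$, then $h^{(q)}(\Omega_i)<\infty$ for all $1\le i\le n$. In particular, when the directed graph of the GIFS is strongly connected, $\dim_{\mathrm{Hd}}\Omega_i\le\dim_{\mathrm{aff}}$ for all $1\le i\le n$.
   Context: Let $N=r+2s+k$. Each $\mathbb{Q}_{\mathfrak{p}_j}$ is the completion of an algebraic number field at a nonzero prime ideal, with normalised $\mathfrak{p}$-adic absolute value $\|\cdot\|_{\mathfrak{p}_j}$. $\mathbb{X}$ carries the maximum metric $d_\infty$: the maximum over the absolute differences of the real coordinates, of the real parts and of the imaginary parts of the complex coordinates, and over $\|x_{r+s+j}-y_{r+s+j}\|_{\mathfrak{p}_j}$. The measure $h^{(q)}$ is the $q$-dimensional Hausdorff measure for $d_\infty$, namely $\lim_{\delta\to0}\inf\{\sum\operatorname{diam}(U_i)^q\}$ over countable covers by sets of diameter $\le\delta$. $\dim_{\mathrm{Hd}}$ is the corresponding Hausdorff dimension. $\mathcal{L}'$ is the set of coordinatewise maps $T(x)=(a_1x_1,\dots,a_{r+s+k}x_{r+s+k})$, with $a_m$ in the field of the $m$-th factor. Their singular values are $|a_m|$ for real factors, $|a_m|$ counted twice for complex factors, and $\|a_{r+s+j}\|_{\mathfrak{p}_j}$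 for $\mathfrak{p}$-adic factors, ordered as $\alpha_1\ge\dots\ge\alpha_N$. We require $\alpha_1<1$ and $\alpha_N>0$. The singular value function is $\Phi^0(T)=1$; $\Phi^q(T)=\alpha_1\cdots\alpha_{j-1}\alpha_j^{q-j+1}$ for $j-1<q\le j\le N$; and $\Phi^q(T)=(\alpha_1\cdots\alpha_N)^{q/N}$ for $q>N$. The GIFS is $\Omega_i=\bigcup_{j=1}^n\bigcup_{f\in F_{ij}}f(\Omega_j)$, with finite sets $F_{ij}$ of affine maps $f(x)=T_f(x)+t_f$, $T_f\in\mathcal{L}'$. Its multigraph has one edge $i\to j$ labelled $f$ for each $f\in F_{ij}$. $E^{(\ell)}_{ij}$ denotes the paths of length $\ell$ from $i$ to $j$, $E^{\mathrm{fin}}$ all finite paths, and $E^\infty$ all infinite paths. For $\omega=\omega_1\cdots\omega_\ell$, set $T_\omega=T_{\omega_1}\circ\cdots\circ T_{\omega_\ell}$. $E^\infty$ has the ultrametric $\eta_0^{-|\omega\wedge\varpi|}$ for a fixed $\eta_0>1$, where $\omega\wedge\varpi$ is the longest common prefix, with cylinders $N(\varpi)$. The measure $\nu^{(q)}$ is the Method II measure from $\tau^q(N(\omega))=\Phi^q(T_\omega)$. For a strongly connected graph, the affinity dimension $\dim_{\mathrm{aff}}$ is the common value of $\inf\{q:\sum_{\omega\in E^{\mathrm{fin}}}\Phi^q(T_\omega)<\infty\}$ and $\inf\{q:\nu^{(q)}(E^\infty)=0\}$. It is also the unique $q>0$ with $\lim_\ell\rho([\sum_{\omega\in E^{(\ell)}_{ij}}\Phi^q(T_\omega)]_{i,j})^{1/\ell}=1$,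 where $\rho$ is the spectral radius. *)

theory Defs
  imports "HOL-Analysis.Analysis" "HOL-Algebra.Embedded_Algebras" "HOL-Algebra.Generated_Fields"
begin

text \<open>A p-adic factor is given as a field F (HOL-Algebra record) together with an
absolute value av on its carrier.  is_padic_completion F av says: av is a nontrivial
non-archimedean absolute value, F is complete for it, F has characteristic 0 and
contains a dense subfield K that is finite-dimensional over the prime field
(a number field), so F is the completion of the number field K at the nonzero prime
ideal determined by av (Ostrowski); finally av is normalised: the uniformiser has
absolute value 1/q, q the cardinality of the residue field.\<close>

definition residue_classes :: "('a, 'b) ring_scheme \<Rightarrow> ('a \<Rightarrow> real) \<Rightarrow> 'a set set" where
  "residue_classes F av =
     (let Oint = {x \<in> carrier F. av x \<le> 1}
      in {{y \<in> Oint. av (x \<ominus>\<^bsub>F\<^esub> y) < 1} | x. x \<in> Oint})"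

definition is_padic_completion :: "('a, 'b) ring_scheme \<Rightarrow> ('a \<Rightarrow> real) \<Rightarrow> bool" where
  "is_padic_completion F av \<longleftrightarrow>
     field F
   \<and> (\<forall>x\<in>carrier F. 0 \<le> av x \<and> (av x = 0 \<longleftrightarrow> x = \<zero>\<^bsub>F\<^esub>))
   \<and> (\<forall>x\<in>carrier F. \<forall>y\<in>carrier F. av (x \<otimes>\<^bsub>F\<^esub> y) = av x * av y)
   \<and> (\<forall>x\<in>carrier F. \<forall>y\<in>carrier F. av (x \<oplus>\<^bsub>F\<^esub> y) \<le> max (av x) (av y))
   \<and> (\<exists>x\<in>carrier F. x \<noteq> \<zero>\<^bsub>F\<^esub> \<and> av x \<noteq> 1)
   \<and> (\<forall>n::nat. n > 0 \<longrightarrow> add_pow F n \<one>\<^bsub>F\<^esub> \<noteq> \<zero>\<^bsub>F\<^esub>)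
   \<and> (\<forall>x::nat \<Rightarrow> 'a. (\<forall>m. x m \<in> carrier F) \<and>
         (\<forall>e>0. \<exists>M. \<forall>m\<ge>M. \<forall>m'\<ge>M. av (x m \<ominus>\<^bsub>F\<^esub> x m') < e)
       \<longrightarrow> (\<exists>l\<in>carrier F. (\<lambda>m. av (x m \<ominus>\<^bsub>F\<^esub> l)) \<longlonglongrightarrow> 0))
   \<and> (\<exists>K. subfield K F \<and> ring.finite_dimension F (generate_field F {}) K
         \<and> (\<forall>x\<in>carrier F. \<forall>e>0. \<exists>y\<in>K. av (x \<ominus>\<^bsub>F\<^esub> y) < e))
   \<and> finite (residue_classes F av)
   \<and> (\<exists>p\<in>carrier F. av p < 1 \<and> (\<forall>x\<in>carrier F. av x < 1 \<longrightarrow> av x \<le> av p)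
         \<and> av p = 1 / real (card (residue_classes F av)))"

text \<open>Points are triples of coordinate functions; coordinates outside the index
ranges are fixed (0 resp. undefined), so that points of X correspond bijectively
to elements of Xset.\<close>

type_synonym 'a pt = "(nat \<Rightarrow> real) \<times> (nat \<Rightarrow> complex) \<times> (nat \<Rightarrow> 'a)"

definition Xset :: "nat \<Rightarrow> nat \<Rightarrow> nat \<Rightarrow> (nat \<Rightarrow> 'a ring) \<Rightarrow> 'a pt set" where
  "Xset r s k F = {(xr, xc, xp). (\<forall>i\<ge>r. xr i = 0) \<and> (\<forall>i\<ge>s. xc i = 0)
       \<and> (\<forall>j<k. xp j \<in> carrier (F j)) \<and> (\<forall>j\<ge>k. xp j = undefined)}"

definition dX :: "nat \<Rightarrow> nat \<Rightarrow> nat \<Rightarrow> (nat \<Rightarrow> 'a ring) \<Rightarrow> (nat \<Rightarrow> 'a \<Rightarrow> real)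
                  \<Rightarrow> 'a pt \<Rightarrow> 'a pt \<Rightarrow> real" where
  "dX r s k F av x y = (case x of (xr, xc, xp) \<Rightarrow> case y of (yr, yc, yp) \<Rightarrow>
     Max ({0} \<union> {\<bar>xr i - yr i\<bar> | i. i < r}
              \<union> {\<bar>Re (xc i - yc i)\<bar> | i. i < s} \<union> {\<bar>Im (xc i - yc i)\<bar> | i. i < s}
              \<union> {av j (xp j \<ominus>\<^bsub>F j\<^esub> yp j) | j. j < k}))"

definition diam_set :: "('p \<Rightarrow> 'p \<Rightarrow> real) \<Rightarrow> 'p set \<Rightarrow> real" where
  "diam_set d U = (if U = {} then 0 else Sup {d x y | x y. x \<in> U \<and> y \<in> U})"

definition diam_pow :: "('p \<Rightarrow> 'p \<Rightarrow> real) \<Rightarrow> 'p set \<Rightarrow> real \<Rightarrow> real" where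
  "diam_pow d U q = (if U = {} then 0 else if q = 0 then 1 else diam_set d U powr q)"

definition hausdorff :: "nat \<Rightarrow> nat \<Rightarrow> nat \<Rightarrow> (nat \<Rightarrow> 'a ring) \<Rightarrow> (nat \<Rightarrow> 'a \<Rightarrow> real)
                         \<Rightarrow> real \<Rightarrow> 'a pt set \<Rightarrow> ennreal" where
  "hausdorff r s k F av q A =
     (SUP \<delta>\<in>{0<..}. INF U \<in> {U :: nat \<Rightarrow> 'a pt set.
          (\<forall>i. U i \<subseteq> Xset r s k F \<and> (\<forall>x\<in>U i. \<forall>y\<in>U i. dX r s k F av x y \<le> \<delta>))
          \<and> A \<subseteq> (\<Union>i. U i)}.
        (\<Sum>i. ennreal (diam_pow (dX r s k F av) (U i) q)))"

definition dim_Hd :: "nat \<Rightarrow> nat \<Rightarrow> nat \<Rightarrow> (nat \<Rightarrow> 'a ring) \<Rightarrow> (nat \<Rightarrow> 'a \<Rightarrow> real)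
                      \<Rightarrow> 'a pt set \<Rightarrow> ereal" where
  "dim_Hd r s k F av A = Inf {ereal q | q. q \<ge> 0 \<and> hausdorff r s k F av q A = 0}"

definition dcompact :: "nat \<Rightarrow> nat \<Rightarrow> nat \<Rightarrow> (nat \<Rightarrow> 'a ring) \<Rightarrow> (nat \<Rightarrow> 'a \<Rightarrow> real)
                        \<Rightarrow> 'a pt set \<Rightarrow> bool" where
  "dcompact r s k F av S \<longleftrightarrow> S \<subseteq> Xset r s k F \<and>
     (\<forall>x :: nat \<Rightarrow> 'a pt. (\<forall>m. x m \<in> S) \<longrightarrow>
        (\<exists>l\<in>S. \<exists>\<sigma>. strict_mono \<sigma> \<and> (\<lambda>m. dX r s k F av (x (\<sigma> m)) l) \<longlonglongrightarrow> 0))"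

text \<open>A coordinatewise linear map T(x) = (a_1 x_1, ...) is represented by its
coefficient point a; an affine map f = T_f + t_f by the pair (a, t).\<close>

definition lin_ok :: "nat \<Rightarrow> nat \<Rightarrow> nat \<Rightarrow> (nat \<Rightarrow> 'a ring) \<Rightarrow> (nat \<Rightarrow> 'a \<Rightarrow> real)
                      \<Rightarrow> 'a pt \<Rightarrow> bool" where
  "lin_ok r s k F av a \<longleftrightarrow> a \<in> Xset r s k F \<and>
     (case a of (ar, ac, ap) \<Rightarrow>
        (\<forall>i<r. 0 < \<bar>ar i\<bar> \<and> \<bar>ar i\<bar> < 1) \<and> (\<forall>i<s. 0 < cmod (ac i) \<and> cmod (ac i) < 1)
      \<and> (\<forall>j<k. 0 < av j (ap j) \<and> av j (ap j) < 1))"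

definition lin_apply :: "nat \<Rightarrow> (nat \<Rightarrow> 'a ring) \<Rightarrow> 'a pt \<Rightarrow> 'a pt \<Rightarrow> 'a pt" where
  "lin_apply k F a x = (case a of (ar, ac, ap) \<Rightarrow> case x of (xr, xc, xp) \<Rightarrow>
     (\<lambda>i. ar i * xr i, \<lambda>i. ac i * xc i,
      \<lambda>j. if j < k then ap j \<otimes>\<^bsub>F j\<^esub> xp j else undefined))"

definition aff_apply :: "nat \<Rightarrow> (nat \<Rightarrow> 'a ring) \<Rightarrow> 'a pt \<times> 'a pt \<Rightarrow> 'a pt \<Rightarrow> 'a pt" where
  "aff_apply k F f x = (case lin_apply k F (fst f) x of (yr, yc, yp) \<Rightarrow>
     case snd f of (tr, tc, tp) \<Rightarrow>
     (\<lambda>i. yr i + tr i, \<lambda>i. yc i + tc i,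
      \<lambda>j. if j < k then yp j \<oplus>\<^bsub>F j\<^esub> tp j else undefined))"

definition lin_id :: "nat \<Rightarrow> nat \<Rightarrow> nat \<Rightarrow> (nat \<Rightarrow> 'a ring) \<Rightarrow> 'a pt" where
  "lin_id r s k F = (\<lambda>i. if i < r then 1 else 0, \<lambda>i. if i < s then 1 else 0,
                     \<lambda>j. if j < k then \<one>\<^bsub>F j\<^esub> else undefined)"

definition lin_comp :: "nat \<Rightarrow> (nat \<Rightarrow> 'a ring) \<Rightarrow> 'a pt \<Rightarrow> 'a pt \<Rightarrow> 'a pt" where
  "lin_comp k F a b = lin_apply k F a b"

definition sing_vals :: "nat \<Rightarrow> nat \<Rightarrow> nat \<Rightarrow> (nat \<Rightarrow> 'a \<Rightarrow> real) \<Rightarrow> 'a pt \<Rightarrow> real list" where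
  "sing_vals r s k av a = (case a of (ar, ac, ap) \<Rightarrow>
     rev (sort (map (\<lambda>i. \<bar>ar i\<bar>) [0..<r]
                @ concat (map (\<lambda>i. [cmod (ac i), cmod (ac i)]) [0..<s])
                @ map (\<lambda>j. av j (ap j)) [0..<k])))"

definition Phi :: "nat \<Rightarrow> nat \<Rightarrow> nat \<Rightarrow> (nat \<Rightarrow> 'a \<Rightarrow> real) \<Rightarrow> real \<Rightarrow> 'a pt \<Rightarrow> real" where
  "Phi r s k av q a =
     (let \<alpha> = sing_vals r s k av a; N = length \<alpha> in
      if q = 0 then 1
      else if q \<le> real N then
        (let j = nat \<lceil>q\<rceil> in (\<Prod>m<j - 1. \<alpha> ! m) * (\<alpha> ! (j - 1)) powr (q - real j + 1))
      else (\<Prod>m<N. \<alpha> ! m) powr (q / real N))"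

text \<open>Vertices are 0..n-1; G i j is the finite set F_ij of affine maps.
An edge is a triple (i, j, f) with f in G i j, directed i \<rightarrow> j.\<close>

type_synonym 'a edge = "nat \<times> nat \<times> ('a pt \<times> 'a pt)"

definition edges :: "nat \<Rightarrow> (nat \<Rightarrow> nat \<Rightarrow> ('a pt \<times> 'a pt) set) \<Rightarrow> 'a edge set" where
  "edges n G = {(i, j, f). i < n \<and> j < n \<and> f \<in> G i j}"

definition esrc :: "'a edge \<Rightarrow> nat" where "esrc e = fst e"
definition etgt :: "'a edge \<Rightarrow> nat" where "etgt e = fst (snd e)"
definition elab :: "'a edge \<Rightarrow> 'a pt \<times> 'a pt" where "elab e = snd (snd e)"

definition Efin :: "nat \<Rightarrow> (nat \<Rightarrow> nat \<Rightarrow> ('a pt \<times> 'a pt) set) \<Rightarrow> 'a edge list set" where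
  "Efin n G = {w. set w \<subseteq> edges n G \<and>
                 (\<forall>m. Suc m < length w \<longrightarrow> etgt (w ! m) = esrc (w ! Suc m))}"

definition Epaths :: "nat \<Rightarrow> (nat \<Rightarrow> nat \<Rightarrow> ('a pt \<times> 'a pt) set) \<Rightarrow> nat \<Rightarrow> nat \<Rightarrow> nat
                      \<Rightarrow> 'a edge list set" where
  "Epaths n G l i j = {w \<in> Efin n G. length w = l \<and> l > 0 \<and>
                         esrc (hd w) = i \<and> etgt (last w) = j}"

definition Einf :: "nat \<Rightarrow> (nat \<Rightarrow> nat \<Rightarrow> ('a pt \<times> 'a pt) set) \<Rightarrow> (nat \<Rightarrow> 'a edge) set" where
  "Einf n G = {w. (\<forall>m. w m \<in> edges n G) \<and> (\<forall>m. etgt (w m) = esrc (w (Suc m)))}"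

definition T_path :: "nat \<Rightarrow> nat \<Rightarrow> nat \<Rightarrow> (nat \<Rightarrow> 'a ring) \<Rightarrow> 'a edge list \<Rightarrow> 'a pt" where
  "T_path r s k F w = foldr (\<lambda>e b. lin_comp k F (fst (elab e)) b) w (lin_id r s k F)"

definition cyl :: "nat \<Rightarrow> (nat \<Rightarrow> nat \<Rightarrow> ('a pt \<times> 'a pt) set) \<Rightarrow> 'a edge list
                   \<Rightarrow> (nat \<Rightarrow> 'a edge) set" where
  "cyl n G w = {\<omega> \<in> Einf n G. \<forall>m<length w. \<omega> m = w ! m}"

definition dE :: "real \<Rightarrow> (nat \<Rightarrow> 'a edge) \<Rightarrow> (nat \<Rightarrow> 'a edge) \<Rightarrow> real" where
  "dE \<eta>0 \<omega> \<omega>' = (if \<omega> = \<omega>' then 0 else \<eta>0 powr (- real (LEAST m. \<omega> m \<noteq> \<omega>' m)))"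

definition nu :: "nat \<Rightarrow> nat \<Rightarrow> nat \<Rightarrow> (nat \<Rightarrow> 'a ring) \<Rightarrow> (nat \<Rightarrow> 'a \<Rightarrow> real) \<Rightarrow> nat
                  \<Rightarrow> (nat \<Rightarrow> nat \<Rightarrow> ('a pt \<times> 'a pt) set) \<Rightarrow> real \<Rightarrow> real
                  \<Rightarrow> (nat \<Rightarrow> 'a edge) set \<Rightarrow> ennreal" where
  "nu r s k F av n G \<eta>0 q A =
     (SUP \<delta>\<in>{0<..}. INF c \<in> {c :: nat \<Rightarrow> 'a edge list.
          (\<forall>i. c i \<in> Efin n G \<and> diam_set (dE \<eta>0) (cyl n G (c i)) \<le> \<delta>)
          \<and> A \<subseteq> (\<Union>i. cyl n G (c i))}.
        (\<Sum>i. ennreal (Phi r s k av q (T_path r s k F (c i)))))"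

definition dim_aff :: "nat \<Rightarrow> nat \<Rightarrow> nat \<Rightarrow> (nat \<Rightarrow> 'a ring) \<Rightarrow> (nat \<Rightarrow> 'a \<Rightarrow> real) \<Rightarrow> nat
                       \<Rightarrow> (nat \<Rightarrow> nat \<Rightarrow> ('a pt \<times> 'a pt) set) \<Rightarrow> ereal" where
  "dim_aff r s k F av n G =
     Inf {ereal q | q. q \<ge> 0 \<and>
            (\<Sum>\<^sub>\<infinity>w\<in>Efin n G. ennreal (Phi r s k av q (T_path r s k F w))) < \<infinity>}"

definition strongly_connected :: "nat \<Rightarrow> (nat \<Rightarrow> nat \<Rightarrow> ('a pt \<times> 'a pt) set) \<Rightarrow> bool" where
  "strongly_connected n G \<longleftrightarrow> (\<forall>i<n. \<forall>j<n. \<exists>l. Epaths n G l i j \<noteq> {})"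

end

theory Submission
  imports Defs
begin

(*
  The cell f_\<omega>(\<Omega>_j) of a path \<omega> lies in a box whose sides are proportional to the
  singular values \<alpha>_1 \<ge> ... \<ge> \<alpha>_N of T_\<omega>. Cutting the m-th side into max 1 (\<alpha>_m / \<alpha>_j)
  pieces, where j = \<lceil>q\<rceil>, splits the cell into about \<Prod>_{m<j} \<alpha>_m / \<alpha>_j sets of
  diameter \<alpha>_j, so its q-dimensional cost is a constant times \<Phi>^q(T_\<omega>). Such cuts exist with a
  uniform constant in every factor, in a p-adic factor by the digits of the p-adic expansion.

  The cells of the paths of a cylinder cover of E^\<infinity>, each path prolonged until its cell is
  small, cover \<Omega>_i; prolonging only decreases the singular values. Hence h^(q)(\<Omega>_i) is at most
  a constant times \<nu>^(q)(E^\<infinity>) + 1. If \<Sum> \<Phi>^q(T_\<omega>) converges, the cells of all paths of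
  one large length cover \<Omega>_i at arbitrarily small total cost, so h^(q)(\<Omega>_i) = 0, which gives
  dim_Hd \<Omega>_i \<le> dim_aff.
*)

section \<open>Linearly coverable sets\<close>

definition linearly_coverable :: "('b \<Rightarrow> 'b \<Rightarrow> real) \<Rightarrow> 'b set \<Rightarrow> real \<Rightarrow> bool" where
  "linearly_coverable d A C \<longleftrightarrow>
     (\<forall>\<rho>>0. \<exists>g :: 'b \<Rightarrow> int. finite (g ` A) \<and> real (card (g ` A)) \<le> C * max 1 (1 / \<rho>)
              \<and> (\<forall>y\<in>A. \<forall>y'\<in>A. g y = g y' \<longrightarrow> d y y' \<le> \<rho>))"

lemma linearly_coverable_mono:
  fixes d :: "'b \<Rightarrow> 'b \<Rightarrow> real"
  assumes "linearly_coverable d A C" and "C \<le> C'"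
  shows "linearly_coverable d A C'"
  unfolding linearly_coverable_def
proof (intro allI impI)
  fix \<rho> :: real assume "\<rho> > 0"
  then obtain g :: "'b \<Rightarrow> int" where g: "finite (g ` A)" "real (card (g ` A)) \<le> C * max 1 (1 / \<rho>)"
    "\<forall>y\<in>A. \<forall>y'\<in>A. g y = g y' \<longrightarrow> d y y' \<le> \<rho>"
    using assms(1) unfolding linearly_coverable_def by blast
  have "C * max 1 (1 / \<rho>) \<le> C' * max 1 (1 / \<rho>)"
    using assms(2) by (intro mult_right_mono) auto
  then show "\<exists>g :: 'b \<Rightarrow> int. finite (g ` A) \<and> real (card (g ` A)) \<le> C' * max 1 (1 / \<rho>)
              \<and> (\<forall>y\<in>A. \<forall>y'\<in>A. g y = g y' \<longrightarrow> d y y' \<le> \<rho>)"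
    using g by force
qed

lemma linearly_coverable_vimage:
  fixes d :: "'b \<Rightarrow> 'b \<Rightarrow> real" and d' :: "'c \<Rightarrow> 'c \<Rightarrow> real"
  assumes "linearly_coverable d A C" and "\<pi> ` B \<subseteq> A"
    and "\<And>x y. x \<in> B \<Longrightarrow> y \<in> B \<Longrightarrow> d' x y = d (\<pi> x) (\<pi> y)"
  shows "linearly_coverable d' B C"
  unfolding linearly_coverable_def
proof (intro allI impI)
  fix \<rho> :: real assume "\<rho> > 0"
  then obtain g :: "'b \<Rightarrow> int" where g: "finite (g ` A)" "real (card (g ` A)) \<le> C * max 1 (1 / \<rho>)"
    "\<forall>y\<in>A. \<forall>y'\<in>A. g y = g y' \<longrightarrow> d y y' \<le> \<rho>"
    using assms(1) unfolding linearly_coverable_def by blast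
  have sub: "(g \<circ> \<pi>) ` B \<subseteq> g ` A" using assms(2) by auto
  show "\<exists>g :: 'c \<Rightarrow> int. finite (g ` B) \<and> real (card (g ` B)) \<le> C * max 1 (1 / \<rho>)
              \<and> (\<forall>y\<in>B. \<forall>y'\<in>B. g y = g y' \<longrightarrow> d' y y' \<le> \<rho>)"
  proof (intro exI[of _ "g \<circ> \<pi>"] conjI ballI impI)
    show "finite ((g \<circ> \<pi>) ` B)" using finite_subset[OF sub g(1)] .
    show "real (card ((g \<circ> \<pi>) ` B)) \<le> C * max 1 (1 / \<rho>)"
      using card_mono[OF g(1) sub] g(2) by linarith
    fix y y' assume y: "y \<in> B" "y' \<in> B" and eq: "(g \<circ> \<pi>) y = (g \<circ> \<pi>) y'"
    have "\<pi> y \<in> A" "\<pi> y' \<in> A" using y assms(2) by auto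
    then show "d' y y' \<le> \<rho>" using g(3) eq assms(3)[OF y] by (metis comp_apply)
  qed
qed

lemma card_floor_interval_le:
  fixes t :: real
  assumes "t \<ge> 0"
  shows "real (card {\<lfloor>- t\<rfloor>..\<lfloor>t\<rfloor>}) \<le> 2 * t + 2"
proof -
  have "\<lfloor>- t\<rfloor> \<le> \<lfloor>t\<rfloor>" using assms by (intro floor_mono) auto
  then have "real (card {\<lfloor>- t\<rfloor>..\<lfloor>t\<rfloor>}) = real_of_int \<lfloor>t\<rfloor> - real_of_int \<lfloor>- t\<rfloor> + 1"
    by (simp add: of_nat_nat)
  moreover have "real_of_int \<lfloor>t\<rfloor> \<le> t" "- t - 1 < real_of_int \<lfloor>- t\<rfloor>"
    by linarith+
  ultimately show ?thesis by linarith
qed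

lemma linearly_coverable_interval:
  fixes D :: real
  assumes "D \<ge> 0"
  shows "linearly_coverable (\<lambda>x y. \<bar>x - y\<bar>) {x. \<bar>x\<bar> \<le> D} (2 * D + 2)"
  unfolding linearly_coverable_def
proof (intro allI impI)
  fix \<rho> :: real assume \<rho>: "\<rho> > 0"
  define A where "A = {x. \<bar>x\<bar> \<le> D}"
  define g where "g y = \<lfloor>y / \<rho>\<rfloor>" for y
  have sub: "g ` A \<subseteq> {\<lfloor>- (D / \<rho>)\<rfloor>..\<lfloor>D / \<rho>\<rfloor>}"
  proof
    fix v assume "v \<in> g ` A"
    then obtain x where x: "\<bar>x\<bar> \<le> D" "v = \<lfloor>x / \<rho>\<rfloor>" unfolding A_def g_def by auto
    have "- D \<le> x" "x \<le> D" using x(1) by linarith+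
    then have "- D / \<rho> \<le> x / \<rho>" "x / \<rho> \<le> D / \<rho>" using \<rho> by (intro divide_right_mono; simp)+
    then show "v \<in> {\<lfloor>- (D / \<rho>)\<rfloor>..\<lfloor>D / \<rho>\<rfloor>}" unfolding x(2) by (simp add: floor_mono)
  qed
  have "real (card (g ` A)) \<le> real (card {\<lfloor>- (D / \<rho>)\<rfloor>..\<lfloor>D / \<rho>\<rfloor>})"
    using card_mono[OF _ sub] by simp
  also have "\<dots> \<le> 2 * (D / \<rho>) + 2"
    using card_floor_interval_le[of "D / \<rho>"] assms \<rho> by simp
  also have "\<dots> \<le> (2 * D + 2) * max 1 (1 / \<rho>)"
  proof -
    have "D / \<rho> \<le> D * max 1 (1 / \<rho>)"
      using mult_left_mono[of "1 / \<rho>" "max 1 (1 / \<rho>)" D] assms by simp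
    then show ?thesis by (simp add: distrib_right)
  qed
  finally have card: "real (card (g ` A)) \<le> (2 * D + 2) * max 1 (1 / \<rho>)" .
  have close: "\<bar>y - y'\<bar> \<le> \<rho>" if "g y = g y'" for y y'
  proof -
    have "\<bar>y / \<rho> - y' / \<rho>\<bar> < 1" using that unfolding g_def by linarith
    then have "\<bar>y - y'\<bar> / \<rho> < 1" using \<rho> by (simp add: diff_divide_distrib[symmetric])
    then show ?thesis using \<rho> by simp
  qed
  show "\<exists>g :: real \<Rightarrow> int. finite (g ` {x. \<bar>x\<bar> \<le> D})
          \<and> real (card (g ` {x. \<bar>x\<bar> \<le> D})) \<le> (2 * D + 2) * max 1 (1 / \<rho>)
          \<and> (\<forall>y\<in>{x. \<bar>x\<bar> \<le> D}. \<forall>y'\<in>{x. \<bar>x\<bar> \<le> D}. g y = g y' \<longrightarrow> \<bar>y - y'\<bar> \<le> \<rho>)"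
    using finite_subset[OF sub] card close unfolding A_def by blast
qed

lemma exists_power_between:
  fixes x Q :: real
  assumes "x > 0" and "Q > 1"
  shows "\<exists>M::nat. x \<le> Q ^ M \<and> Q ^ M \<le> Q * max 1 x"
proof (cases "x \<le> 1")
  case True
  then show ?thesis using assms by (intro exI[of _ 0]) auto
next
  case False
  obtain M0 where "x < Q ^ M0" using real_arch_pow[OF assms(2)] by blast
  then obtain M where M: "x \<le> Q ^ M" "\<forall>i<M. \<not> x \<le> Q ^ i"
    using ex_least_nat_le[of "\<lambda>i. x \<le> Q ^ i" M0] False by auto
  have "M > 0" using M(1) False by (cases M) auto
  then have "Q ^ (M - 1) < x" using M(2) by (meson diff_less not_le zero_less_one)
  then have "Q * Q ^ (M - 1) \<le> Q * x" using assms by simp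
  then have "Q ^ M \<le> Q * max 1 x" using \<open>M > 0\<close> False by (simp add: power_eq_if)
  then show ?thesis using M(1) by blast
qed

lemma card_image_restrict_le_prod:
  assumes "finite I" and "\<And>i. i \<in> I \<Longrightarrow> finite (g i ` A)"
  shows "card ((\<lambda>x. restrict (\<lambda>i. g i x) I) ` A) \<le> (\<Prod>i\<in>I. card (g i ` A))"
proof -
  have "(\<lambda>x. restrict (\<lambda>i. g i x) I) ` A \<subseteq> (\<Pi>\<^sub>E i\<in>I. g i ` A)" by auto
  moreover have "finite (\<Pi>\<^sub>E i\<in>I. g i ` A)" using assms by (rule finite_PiE)
  ultimately show ?thesis using card_mono by (fastforce simp: card_PiE[OF assms(1)])
qed

lemma finite_image_restrict:
  assumes "finite I" and "\<And>i. i \<in> I \<Longrightarrow> finite (g i ` A)"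
  shows "finite ((\<lambda>x. restrict (\<lambda>i. g i x) I) ` A)"
proof -
  have "(\<lambda>x. restrict (\<lambda>i. g i x) I) ` A \<subseteq> (\<Pi>\<^sub>E i\<in>I. g i ` A)" by auto
  then show ?thesis using finite_PiE[OF assms] by (rule finite_subset)
qed

section \<open>Hausdorff content\<close>

lemma diam_pow_nonneg: "0 \<le> diam_pow d U q"
  by (simp add: diam_pow_def)

lemma diam_set_le:
  assumes "P \<noteq> {}" "\<And>x y. x \<in> P \<Longrightarrow> y \<in> P \<Longrightarrow> d x y \<le> b" "\<And>x y. 0 \<le> d x y"
  shows "0 \<le> diam_set d P" "diam_set d P \<le> b"
proof -
  have ne: "{d x y | x y. x \<in> P \<and> y \<in> P} \<noteq> {}" using assms(1) by blast
  have bdd: "bdd_above {d x y | x y. x \<in> P \<and> y \<in> P}" using assms(2) by (auto intro!: bdd_aboveI)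
  obtain x where x: "x \<in> P" using assms(1) by blast
  have "d x x \<le> Sup {d x y | x y. x \<in> P \<and> y \<in> P}" using x by (intro cSup_upper[OF _ bdd]) blast
  then show "0 \<le> diam_set d P" using assms(1) assms(3)[of x x] by (simp add: diam_set_def)
  show "diam_set d P \<le> b" using assms(1) unfolding diam_set_def
    by (auto intro!: cSup_least[OF ne] assms(2))
qed

lemma sum_diam_pow_le:
  assumes q: "q > 0" and small: "\<And>P x y. P \<in> set Ps \<Longrightarrow> x \<in> P \<Longrightarrow> y \<in> P \<Longrightarrow> d x y \<le> b"
    and nonneg: "\<And>x y. 0 \<le> d x y"
  shows "(\<Sum>P\<leftarrow>Ps. diam_pow d P q) \<le> real (length Ps) * b powr q"
proof -
  have "diam_pow d P q \<le> b powr q" if P: "P \<in> set Ps" for P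
  proof (cases "P = {}")
    case False
    then have "0 \<le> diam_set d P" "diam_set d P \<le> b"
      using diam_set_le[of P d b, OF False small[OF P] nonneg] by blast+
    then show ?thesis using False q by (simp add: diam_pow_def powr_mono2)
  qed (simp add: diam_pow_def)
  then have "(\<Sum>P\<leftarrow>Ps. diam_pow d P q) \<le> (\<Sum>P\<leftarrow>Ps. b powr q)" by (intro sum_list_mono) auto
  then show ?thesis by (simp add: sum_list_triv)
qed

definition hcontent :: "('p \<Rightarrow> 'p \<Rightarrow> real) \<Rightarrow> 'p set \<Rightarrow> real \<Rightarrow> real \<Rightarrow> 'p set \<Rightarrow> ennreal" where
  "hcontent d S q \<delta> A =
     (INF U \<in> {U :: nat \<Rightarrow> 'p set. (\<forall>i. U i \<subseteq> S \<and> (\<forall>x\<in>U i. \<forall>y\<in>U i. d x y \<le> \<delta>)) \<and> A \<subseteq> (\<Union>i. U i)}.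
        (\<Sum>i. ennreal (diam_pow d (U i) q)))"

lemma hausdorff_eq_SUP_hcontent:
  "hausdorff r s k F av q A = (SUP \<delta>\<in>{0<..}. hcontent (dX r s k F av) (Xset r s k F) q \<delta> A)"
  by (simp add: hausdorff_def hcontent_def)

lemma hcontent_le_suminf:
  assumes cover: "A \<subseteq> (\<Union>m. B m)"
    and pieces: "\<And>m. \<exists>Ps. B m \<subseteq> \<Union>(set Ps) \<and> (\<forall>P\<in>set Ps. P \<subseteq> S \<and> (\<forall>x\<in>P. \<forall>y\<in>P. d x y \<le> \<delta>))
                       \<and> (\<Sum>P\<leftarrow>Ps. diam_pow d P q) \<le> b m"
  shows "hcontent d S q \<delta> A \<le> (\<Sum>m. ennreal (b m))"
proof -
  obtain Ps where Ps_cover: "\<And>m. B m \<subseteq> \<Union>(set (Ps m))"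
    and Ps_small: "\<And>m P. P \<in> set (Ps m) \<Longrightarrow> P \<subseteq> S \<and> (\<forall>x\<in>P. \<forall>y\<in>P. d x y \<le> \<delta>)"
    and Ps_cost: "\<And>m. (\<Sum>P\<leftarrow>Ps m. diam_pow d P q) \<le> b m"
    using pieces by metis
  define V where "V mt = (if snd mt < length (Ps (fst mt)) then Ps (fst mt) ! snd mt else {})" for mt
  define U where "U j = V (prod_decode j)" for j
  have V_small: "V mt \<subseteq> S \<and> (\<forall>x\<in>V mt. \<forall>y\<in>V mt. d x y \<le> \<delta>)" for mt
  proof (cases "snd mt < length (Ps (fst mt))")
    case True
    then have "V mt \<in> set (Ps (fst mt))" unfolding V_def by simp
    then show ?thesis using Ps_small by blast
  qed (simp add: V_def)
  have "U \<in> {U. (\<forall>i. U i \<subseteq> S \<and> (\<forall>x\<in>U i. \<forall>y\<in>U i. d x y \<le> \<delta>)) \<and> A \<subseteq> (\<Union>i. U i)}"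
  proof (intro CollectI conjI allI)
    fix i
    show "U i \<subseteq> S" "\<forall>x\<in>U i. \<forall>y\<in>U i. d x y \<le> \<delta>"
      using V_small unfolding U_def by auto
  next
    show "A \<subseteq> (\<Union>i. U i)"
    proof
      fix x assume "x \<in> A"
      then obtain m P where "P \<in> set (Ps m)" "x \<in> P" using cover Ps_cover by blast
      then obtain t where "t < length (Ps m)" "x \<in> Ps m ! t" by (auto simp: in_set_conv_nth)
      then have "x \<in> U (prod_encode (m, t))" unfolding U_def V_def by simp
      then show "x \<in> (\<Union>i. U i)" by blast
    qed
  qed
  then have "hcontent d S q \<delta> A \<le> (\<Sum>j. ennreal (diam_pow d (U j) q))"
    unfolding hcontent_def by (rule INF_lower)
  also have "\<dots> = (\<Sum>m. \<Sum>t. ennreal (diam_pow d (V (m, t)) q))"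
    unfolding U_def by (rule suminf_ennreal_2dimen) simp
  also have "\<dots> \<le> (\<Sum>m. ennreal (b m))"
  proof (rule suminf_le)
    fix m
    have "(\<Sum>t. ennreal (diam_pow d (V (m, t)) q)) = (\<Sum>t<length (Ps m). ennreal (diam_pow d (Ps m ! t) q))"
      by (subst suminf_finite[of "{..<length (Ps m)}"]) (auto simp: V_def diam_pow_def)
    also have "\<dots> = ennreal (\<Sum>P\<leftarrow>Ps m. diam_pow d P q)"
      by (simp add: sum_list_sum_nth lessThan_atLeast0 diam_pow_nonneg)
    also have "\<dots> \<le> ennreal (b m)" using Ps_cost by (rule ennreal_leI)
    finally show "(\<Sum>t. ennreal (diam_pow d (V (m, t)) q)) \<le> ennreal (b m)" .
  qed auto
  finally show ?thesis .
qed

lemma level_sum_le_of_infsum_finite: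
  fixes f :: "'b \<Rightarrow> ennreal" and g :: "'b \<Rightarrow> nat"
  assumes S: "infsum f A < \<infinity>" and e: "e > 0" and fin: "\<And>l. finite {x \<in> A. g x = l}"
  shows "\<exists>l0. \<forall>l\<ge>l0. sum f {x \<in> A. g x = l} \<le> e"
proof -
  have Seq: "infsum f A = (SUP F\<in>{F. finite F \<and> F \<subseteq> A}. sum f F)"
    by (rule nonneg_infsum_complete) simp
  have "infsum f A + 0 < infsum f A + e" using S e by (subst ennreal_add_left_cancel_less) auto
  also have "infsum f A + e = (SUP F\<in>{F. finite F \<and> F \<subseteq> A}. sum f F + e)"
    unfolding Seq by (rule ennreal_SUP_add_left[symmetric]) auto
  finally obtain F where F: "finite F" "F \<subseteq> A" "infsum f A < sum f F + e"
    by (auto simp: less_SUP_iff)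
  define l0 where "l0 = Suc (Max (insert 0 (g ` F)))"
  have disj: "{x \<in> A. g x = l} \<inter> F = {}" if "l \<ge> l0" for l
  proof -
    have "g x < l" if "x \<in> F" for x
    proof -
      have "g x \<le> Max (insert 0 (g ` F))" using F(1) that by (intro Max_ge) auto
      then show ?thesis using \<open>l \<ge> l0\<close> unfolding l0_def by simp
    qed
    then show ?thesis by auto
  qed
  show ?thesis
  proof (intro exI[of _ l0] allI impI)
    fix l assume l: "l \<ge> l0"
    have "sum f F + sum f {x \<in> A. g x = l} = sum f (F \<union> {x \<in> A. g x = l})"
      using disj[OF l] F(1) fin[of l] by (simp add: sum.union_disjoint Int_commute)
    also have "\<dots> \<le> infsum f A" unfolding Seq
      using F(1,2) fin[of l] by (intro SUP_upper) auto
    also have "\<dots> < sum f F + e" by (rule F(3))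
    finally have "sum f {x \<in> A. g x = l} < e" by (simp add: ennreal_add_left_cancel_less)
    then show "sum f {x \<in> A. g x = l} \<le> e" by simp
  qed
qed

section \<open>Completions of number fields\<close>

locale padic_completion = field F for F (structure) +
  fixes av :: "'a \<Rightarrow> real"
  assumes padic_completion: "is_padic_completion F av"
begin

lemma av_nonneg: "x \<in> carrier F \<Longrightarrow> 0 \<le> av x"
  and av_eq_0_iff: "x \<in> carrier F \<Longrightarrow> av x = 0 \<longleftrightarrow> x = \<zero>"
  and av_mult: "x \<in> carrier F \<Longrightarrow> y \<in> carrier F \<Longrightarrow> av (x \<otimes> y) = av x * av y"
  and av_add_le_max: "x \<in> carrier F \<Longrightarrow> y \<in> carrier F \<Longrightarrow> av (x \<oplus> y) \<le> max (av x) (av y)"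
  using padic_completion unfolding is_padic_completion_def by blast+

lemma av_zero [simp]: "av \<zero> = 0"
  using av_eq_0_iff by simp

lemma av_one [simp]: "av \<one> = 1"
proof -
  have "av \<one> = av \<one> * av \<one>" using av_mult[of \<one> \<one>] by simp
  moreover have "av \<one> \<noteq> 0" using av_eq_0_iff[of \<one>] by simp
  ultimately show ?thesis by simp
qed

lemma av_uminus: "x \<in> carrier F \<Longrightarrow> av (\<ominus> x) = av x"
proof -
  assume x: "x \<in> carrier F"
  have "\<ominus> \<one> \<otimes> \<ominus> \<one> = \<one>" by algebra
  then have "av (\<ominus> \<one>) * av (\<ominus> \<one>) = 1" using av_mult[of "\<ominus> \<one>" "\<ominus> \<one>"] by simp
  then have "av (\<ominus> \<one>) ^ 2 = 1" by (simp add: power2_eq_square)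
  then have "av (\<ominus> \<one>) = 1" using av_nonneg[of "\<ominus> \<one>"] by (auto simp: power2_eq_1_iff)
  then show ?thesis using x av_mult[of "\<ominus> \<one>" x] by (simp add: l_minus)
qed

lemma av_diff_le_max: "x \<in> carrier F \<Longrightarrow> y \<in> carrier F \<Longrightarrow> av (x \<ominus> y) \<le> max (av x) (av y)"
  unfolding a_minus_def using av_add_le_max[of x "\<ominus> y"] av_uminus[of y] by simp

lemma av_inv: "x \<in> carrier F \<Longrightarrow> x \<noteq> \<zero> \<Longrightarrow> av (inv x) = 1 / av x"
proof -
  assume x: "x \<in> carrier F" "x \<noteq> \<zero>"
  then have u: "x \<in> Units F" using field_Units by auto
  have "av x * av (inv x) = 1" using av_mult[OF x(1) Units_inv_closed[OF u]] u by simp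
  then show ?thesis using av_eq_0_iff x by (simp add: field_simps)
qed

lemma av_pow: "x \<in> carrier F \<Longrightarrow> av (x [^] (m::nat)) = av x ^ m"
  by (induction m) (simp_all add: av_mult)

abbreviation residue_card :: nat where
  "residue_card \<equiv> card (residue_classes F av)"

lemma finite_residue_classes: "finite (residue_classes F av)"
  using padic_completion unfolding is_padic_completion_def by blast

lemma uniformiser:
  obtains p where "p \<in> carrier F" "p \<noteq> \<zero>" "av p = 1 / real residue_card"
    "\<And>x. x \<in> carrier F \<Longrightarrow> av x < 1 \<Longrightarrow> av x \<le> av p"
    and "residue_card \<ge> 2"
proof -
  have "\<exists>p\<in>carrier F. av p < 1 \<and> (\<forall>x\<in>carrier F. av x < 1 \<longrightarrow> av x \<le> av p)
          \<and> av p = 1 / real residue_card"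
    using padic_completion unfolding is_padic_completion_def by blast
  then obtain p where p: "p \<in> carrier F" "av p < 1" "\<And>x. x \<in> carrier F \<Longrightarrow> av x < 1 \<Longrightarrow> av x \<le> av p"
    "av p = 1 / real residue_card"
    by blast
  have "\<zero> \<in> {x \<in> carrier F. av x \<le> 1}" by simp
  then have "{y \<in> {x \<in> carrier F. av x \<le> 1}. av (\<zero> \<ominus> y) < 1} \<in> residue_classes F av"
    unfolding residue_classes_def Let_def by blast
  then have "residue_classes F av \<noteq> {}" by blast
  then have "residue_card \<ge> 1" using finite_residue_classes by (simp add: Suc_leI card_gt_0_iff)
  moreover have "residue_card \<noteq> 1" using p(2,4) by auto
  ultimately have Q: "residue_card \<ge> 2" by simp
  then have "p \<noteq> \<zero>" using p(4) by auto
  then show thesis using that p Q by blast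
qed

lemma first_digit:
  "\<exists>(e :: 'a \<Rightarrow> nat) (c :: 'a \<Rightarrow> 'a). \<forall>y\<in>carrier F. av y \<le> 1 \<longrightarrow>
      e y < residue_card \<and> c y \<in> carrier F \<and> av (y \<ominus> c y) \<le> 1 / real residue_card
      \<and> (\<forall>y'\<in>carrier F. av y' \<le> 1 \<longrightarrow> e y = e y' \<longrightarrow> c y = c y')"
proof -
  obtain p where p: "av p = 1 / real residue_card" "\<And>x. x \<in> carrier F \<Longrightarrow> av x < 1 \<Longrightarrow> av x \<le> av p"
    using uniformiser by blast
  obtain e where e: "bij_betw e (residue_classes F av) {0..<residue_card}"
    using ex_bij_betw_finite_nat[OF finite_residue_classes] by blast
  define cls where "cls y = {y' \<in> {x \<in> carrier F. av x \<le> 1}. av (y \<ominus> y') < 1}" for y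
  define c where "c y = (SOME z. z \<in> cls y)" for y
  have cls: "cls y \<in> residue_classes F av" if "y \<in> carrier F" "av y \<le> 1" for y
    using that unfolding residue_classes_def Let_def cls_def by blast
  have c: "c y \<in> carrier F" "av (y \<ominus> c y) < 1" if y: "y \<in> carrier F" "av y \<le> 1" for y
  proof -
    have "y \<ominus> y = \<zero>" using y by simp
    then have "av (y \<ominus> y) < 1" by (metis av_zero zero_less_one)
    then have "y \<in> cls y" using y unfolding cls_def by simp
    then have "c y \<in> cls y" unfolding c_def by (rule someI)
    then show "c y \<in> carrier F" "av (y \<ominus> c y) < 1" unfolding cls_def by auto
  qed
  show ?thesis
  proof (intro exI[of _ "\<lambda>y. e (cls y)"] exI[of _ c] ballI impI conjI)
    fix y assume y: "y \<in> carrier F" "av y \<le> 1"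
    show "e (cls y) < residue_card" using e cls[OF y] by (auto dest: bij_betw_apply)
    show "c y \<in> carrier F" using c[OF y] by simp
    show "av (y \<ominus> c y) \<le> 1 / real residue_card" using p c[OF y] y by simp
    fix y' assume y': "y' \<in> carrier F" "av y' \<le> 1" and "e (cls y) = e (cls y')"
    then have "cls y = cls y'" using e cls[OF y] cls[OF y'] unfolding bij_betw_def inj_on_def by blast
    then show "c y = c y'" unfolding c_def by simp
  qed
qed

text \<open>The first digit is the residue class; the remaining digits are those of the quotient
  by the uniformiser.\<close>
lemma digit_code:
  "\<exists>g::'a \<Rightarrow> nat. (\<forall>y\<in>carrier F. av y \<le> 1 \<longrightarrow> g y < residue_card ^ M) \<and>
     (\<forall>y\<in>carrier F. \<forall>y'\<in>carrier F. av y \<le> 1 \<longrightarrow> av y' \<le> 1 \<longrightarrow> g y = g y'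
        \<longrightarrow> av (y \<ominus> y') \<le> (1 / real residue_card) ^ M)"
proof (induction M)
  case 0
  show ?case by (rule exI[of _ "\<lambda>_. 0"]) (auto dest: av_diff_le_max)
next
  case (Suc M)
  define Q where "Q = residue_card"
  then obtain g where g_less: "\<And>y. y \<in> carrier F \<Longrightarrow> av y \<le> 1 \<Longrightarrow> g y < Q ^ M"
    and g_close: "\<And>y y'. y \<in> carrier F \<Longrightarrow> y' \<in> carrier F \<Longrightarrow> av y \<le> 1 \<Longrightarrow> av y' \<le> 1
                   \<Longrightarrow> g y = g y' \<Longrightarrow> av (y \<ominus> y') \<le> (1 / real Q) ^ M"
    using Suc by blast
  obtain e :: "'a \<Rightarrow> nat" and c :: "'a \<Rightarrow> 'a" where ec: "\<forall>y\<in>carrier F. av y \<le> 1 \<longrightarrow>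
      e y < Q \<and> c y \<in> carrier F \<and> av (y \<ominus> c y) \<le> 1 / real Q
      \<and> (\<forall>y'\<in>carrier F. av y' \<le> 1 \<longrightarrow> e y = e y' \<longrightarrow> c y = c y')"
    using first_digit unfolding Q_def by blast
  have e: "e y < Q" and c: "c y \<in> carrier F" "av (y \<ominus> c y) \<le> 1 / real Q"
    if "y \<in> carrier F" "av y \<le> 1" for y
    using ec that by blast+
  have c_eq: "c y = c y'" if "y \<in> carrier F" "av y \<le> 1" "y' \<in> carrier F" "av y' \<le> 1" "e y = e y'" for y y'
    using ec that by blast
  obtain p where p: "p \<in> carrier F" "p \<noteq> \<zero>" "av p = 1 / real Q" and Q2: "Q \<ge> 2"
    using uniformiser unfolding Q_def by blast
  have ip: "inv p \<in> carrier F" "av (inv p) = real Q"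
    using p av_inv[OF p(1,2)] field_Units by auto
  define u where "u y = inv p \<otimes> (y \<ominus> c y)" for y
  have u: "u y \<in> carrier F" "av (u y) \<le> 1" if y: "y \<in> carrier F" "av y \<le> 1" for y
  proof -
    have d: "y \<ominus> c y \<in> carrier F" using c(1)[OF y] y by simp
    show "u y \<in> carrier F" using d ip unfolding u_def by simp
    show "av (u y) \<le> 1" using c(2)[OF y] Q2 unfolding u_def av_mult[OF ip(1) d] ip(2) by (simp add: field_simps)
  qed
  define g' where "g' y = e y + Q * g (u y)" for y
  show ?case
  proof (rule exI[of _ g'], intro conjI ballI impI)
    fix y assume y: "y \<in> carrier F" "av y \<le> 1"
    have "g (u y) < Q ^ M" using g_less u[OF y] by blast
    then have "Q * Suc (g (u y)) \<le> Q * Q ^ M" by (intro mult_le_mono2) simp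
    then show "g' y < residue_card ^ Suc M" using e[OF y] unfolding g'_def Q_def[symmetric] by simp
  next
    fix y y' assume y: "y \<in> carrier F" "av y \<le> 1" and y': "y' \<in> carrier F" "av y' \<le> 1"
      and eq: "g' y = g' y'"
    have "e y = e y'" using eq e[OF y] e[OF y'] unfolding g'_def by (metis mod_mult_self2 mod_less)
    then have "g (u y) = g (u y')" using eq Q2 unfolding g'_def by simp
    have "c y = c y'" using c_eq y y' \<open>e y = e y'\<close> by blast
    then have "u y \<ominus> u y' = inv p \<otimes> (y \<ominus> c y') \<ominus> inv p \<otimes> (y' \<ominus> c y')"
      unfolding u_def by simp
    also have "\<dots> = inv p \<otimes> (y \<ominus> y')"
      using y(1) y'(1) c(1)[OF y'] ip(1) by algebra
    finally have "u y \<ominus> u y' = inv p \<otimes> (y \<ominus> y')" .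
    moreover have "av (u y \<ominus> u y') \<le> (1 / real Q) ^ M"
      using g_close u[OF y] u[OF y'] \<open>g (u y) = g (u y')\<close> by simp
    ultimately have "real Q * av (y \<ominus> y') \<le> (1 / real Q) ^ M"
      using av_mult[OF ip(1)] y y' ip(2) by simp
    then show "av (y \<ominus> y') \<le> (1 / real residue_card) ^ Suc M"
      using Q2 unfolding Q_def by (simp add: field_simps)
  qed
qed

text \<open>Scaling by a power of the uniformiser moves the ball of radius D into the unit ball,
  where the digit code applies.\<close>
lemma linearly_coverable_ball:
  "\<exists>C. linearly_coverable (\<lambda>x y. av (x \<ominus> y)) {x \<in> carrier F. av x \<le> D} C"
proof -
  obtain p where p: "p \<in> carrier F" "av p = 1 / real residue_card" and Q2: "residue_card \<ge> 2"
    using uniformiser by blast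
  define Q where "Q = real residue_card"
  have Q1: "Q > 1" using Q2 unfolding Q_def by simp
  obtain M0 where M0: "D < Q ^ M0" using real_arch_pow[OF Q1] by blast
  define z where "z = p [^] M0"
  have z: "z \<in> carrier F" "av z = (1 / Q) ^ M0"
    unfolding z_def Q_def using av_pow[OF p(1)] p by simp_all
  have zy: "av (z \<otimes> y) = av y / Q ^ M0" if "y \<in> carrier F" for y
    using av_mult[OF z(1) that] z(2) by (simp add: power_one_over)
  show ?thesis unfolding linearly_coverable_def
  proof (intro exI[of _ "Q * Q ^ M0"] allI impI)
    fix \<rho> :: real assume \<rho>: "\<rho> > 0"
    obtain M where M: "Q ^ M0 / \<rho> \<le> Q ^ M" "Q ^ M \<le> Q * max 1 (Q ^ M0 / \<rho>)"
      using exists_power_between[of "Q ^ M0 / \<rho>" Q] \<rho> Q1 by auto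
    obtain gd where gd_less: "\<And>y. y \<in> carrier F \<Longrightarrow> av y \<le> 1 \<Longrightarrow> gd y < residue_card ^ M"
      and gd_close: "\<And>y y'. y \<in> carrier F \<Longrightarrow> y' \<in> carrier F \<Longrightarrow> av y \<le> 1 \<Longrightarrow> av y' \<le> 1
                  \<Longrightarrow> gd y = gd y' \<Longrightarrow> av (y \<ominus> y') \<le> (1 / Q) ^ M"
      using digit_code[of M] unfolding Q_def by blast
    define A where "A = {x \<in> carrier F. av x \<le> D}"
    define g where "g y = int (gd (z \<otimes> y))" for y
    have unit: "av (z \<otimes> y) \<le> 1" if "y \<in> A" for y
    proof -
      have "av (z \<otimes> y) = av y / Q ^ M0" using zy that unfolding A_def by simp
      then show ?thesis using that M0 Q1 unfolding A_def by simp
    qed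
    have sub: "g ` A \<subseteq> int ` {..<residue_card ^ M}"
      using gd_less unit z(1) unfolding g_def A_def by auto
    have "card (g ` A) \<le> card (int ` {..<residue_card ^ M})" by (rule card_mono[OF _ sub]) simp
    also have "\<dots> \<le> residue_card ^ M" using card_image_le[of "{..<residue_card ^ M}" int] by simp
    finally have "real (card (g ` A)) \<le> Q ^ M" unfolding Q_def by (metis of_nat_le_iff of_nat_power)
    also have "\<dots> \<le> Q * Q ^ M0 * max 1 (1 / \<rho>)"
    proof -
      have q: "1 \<le> Q ^ M0" using Q1 by simp
      have "1 \<le> Q ^ M0 * max 1 (1 / \<rho>)"
        using mult_mono[of 1 "Q ^ M0" 1 "max 1 (1 / \<rho>)"] q by simp
      moreover have "Q ^ M0 / \<rho> \<le> Q ^ M0 * max 1 (1 / \<rho>)"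
        using mult_left_mono[of "1 / \<rho>" "max 1 (1 / \<rho>)" "Q ^ M0"] q by simp
      ultimately have "max 1 (Q ^ M0 / \<rho>) \<le> Q ^ M0 * max 1 (1 / \<rho>)" by (rule max.boundedI)
      then have "Q * max 1 (Q ^ M0 / \<rho>) \<le> Q * (Q ^ M0 * max 1 (1 / \<rho>))"
        using Q1 by (intro mult_left_mono) auto
      with M(2) show ?thesis by (simp add: mult.assoc)
    qed
    finally have card: "real (card (g ` A)) \<le> Q * Q ^ M0 * max 1 (1 / \<rho>)" .
    have close: "av (y \<ominus> y') \<le> \<rho>" if "y \<in> A" "y' \<in> A" "g y = g y'" for y y'
    proof -
      have yc: "y \<in> carrier F" "y' \<in> carrier F" using that unfolding A_def by auto
      have "z \<otimes> y \<ominus> z \<otimes> y' = z \<otimes> (y \<ominus> y')" using yc z(1) by algebra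
      then have "av (y \<ominus> y') / Q ^ M0 \<le> (1 / Q) ^ M"
        using gd_close[of "z \<otimes> y" "z \<otimes> y'"] unit that yc z(1) zy[of "y \<ominus> y'"] unfolding g_def by simp
      then have "av (y \<ominus> y') \<le> Q ^ M0 / Q ^ M" using Q1 by (simp add: field_simps power_one_over)
      also have "\<dots> \<le> \<rho>" using M(1) \<rho> Q1 by (simp add: field_simps)
      finally show ?thesis .
    qed
    show "\<exists>g :: 'a \<Rightarrow> int. finite (g ` {x \<in> carrier F. av x \<le> D})
            \<and> real (card (g ` {x \<in> carrier F. av x \<le> D})) \<le> Q * Q ^ M0 * max 1 (1 / \<rho>)
            \<and> (\<forall>y\<in>{x \<in> carrier F. av x \<le> D}. \<forall>y'\<in>{x \<in> carrier F. av x \<le> D}.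
                 g y = g y' \<longrightarrow> av (y \<ominus> y') \<le> \<rho>)"
      using finite_subset[OF sub] card close unfolding A_def by blast
  qed
qed

end

section \<open>The singular value function\<close>

lemma prod_list_eq_prod_sorted_desc:
  fixes g :: "real \<Rightarrow> real"
  shows "prod_list (map g xs) = (\<Prod>m<length xs. g (rev (sort xs) ! m))"
proof -
  have "prod_list (map g xs) = prod_list (map g (rev (sort xs)))"
    by (metis mset_map mset_rev mset_sort prod_mset_prod_list)
  also have "\<dots> = (\<Prod>m<length xs. g (rev (sort xs) ! m))"
    by (simp add: prod.list_conv_set_nth lessThan_atLeast0)
  finally show ?thesis .
qed

lemma prod_list_max_one_div_sorted:
  fixes xs :: "real list"
  assumes pos: "\<forall>x\<in>set xs. x > 0" and t: "t < length xs"
  defines "\<sigma> \<equiv> rev (sort xs)"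
  shows "prod_list (map (\<lambda>x. max 1 (x / \<sigma>!t)) xs) = (\<Prod>m<t. \<sigma>!m) / \<sigma>!t ^ t"
proof -
  have desc: "\<sigma>!b \<le> \<sigma>!a" if "a \<le> b" "b < length xs" for a b
    using that unfolding \<sigma>_def by (simp add: rev_nth sorted_nth_mono)
  have tpos: "0 < \<sigma>!t" using pos t unfolding \<sigma>_def by (metis length_rev length_sort nth_mem set_rev set_sort)
  have split: "{..<length xs} = {..<t} \<union> {t..<length xs}" using t by auto
  have "prod_list (map (\<lambda>x. max 1 (x / \<sigma>!t)) xs) = (\<Prod>m<length xs. max 1 (\<sigma>!m / \<sigma>!t))"
    unfolding \<sigma>_def by (rule prod_list_eq_prod_sorted_desc)
  also have "\<dots> = (\<Prod>m<t. max 1 (\<sigma>!m / \<sigma>!t)) * (\<Prod>m\<in>{t..<length xs}. max 1 (\<sigma>!m / \<sigma>!t))"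
    by (subst split, rule prod.union_disjoint) auto
  also have "(\<Prod>m<t. max 1 (\<sigma>!m / \<sigma>!t)) = (\<Prod>m<t. \<sigma>!m / \<sigma>!t)"
  proof (rule prod.cong)
    fix m assume "m \<in> {..<t}"
    then have "\<sigma>!t \<le> \<sigma>!m" using desc t by simp
    then show "max 1 (\<sigma>!m / \<sigma>!t) = \<sigma>!m / \<sigma>!t" using tpos by simp
  qed simp
  also have "(\<Prod>m\<in>{t..<length xs}. max 1 (\<sigma>!m / \<sigma>!t)) = 1"
  proof (rule prod.neutral, rule ballI)
    fix m assume "m \<in> {t..<length xs}"
    then have "\<sigma>!m \<le> \<sigma>!t" using desc by simp
    then show "max 1 (\<sigma>!m / \<sigma>!t) = 1" using tpos by simp
  qed
  finally show ?thesis by (simp add: prod_dividef)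
qed

text \<open>A box with sides x_1, ..., x_N is covered by about \<Prod> max 1 (x_m / \<sigma>_j) cubes of side \<sigma>_j;
  with weight \<sigma>_j^q this is the singular value function (the right-hand side), or less when q
  exceeds the dimension.\<close>
lemma prod_max_one_div_powr_le_sv_function:
  fixes xs :: "real list" and q :: real
  assumes pos: "\<forall>x\<in>set xs. x > 0" and ne: "xs \<noteq> []" and q: "q > 0"
  defines "\<sigma> \<equiv> rev (sort xs)" and "N \<equiv> length xs"
  defines "j \<equiv> (if q \<le> real N then nat \<lceil>q\<rceil> else N)"
  shows "prod_list (map (\<lambda>x. max 1 (x / \<sigma>!(j-1))) xs) * (\<sigma>!(j-1)) powr q
       \<le> (if q \<le> real N then (\<Prod>m<j-1. \<sigma>!m) * (\<sigma>!(j-1)) powr (q - real j + 1)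
          else (\<Prod>m<N. \<sigma>!m) powr (q / real N))"
proof -
  define t where "t = j - 1"
  have N0: "N > 0" using ne by (simp add: N_def)
  have j1: "1 \<le> j" "j \<le> N" using q N0 by (auto simp: j_def) linarith
  have tN: "t < N" using j1 by (simp add: t_def)
  have spos: "0 < \<sigma>!m" if "m < N" for m
    using pos that unfolding \<sigma>_def N_def by (metis length_rev length_sort nth_mem set_rev set_sort)
  have key: "prod_list (map (\<lambda>x. max 1 (x / \<sigma>!t)) xs) * (\<sigma>!t) powr q
           = (\<Prod>m<t. \<sigma>!m) * (\<sigma>!t) powr (q - real t)"
    using prod_list_max_one_div_sorted[OF pos tN[unfolded N_def]] spos[OF tN]
    unfolding \<sigma>_def[symmetric] by (simp add: powr_diff powr_realpow)
  show ?thesis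
  proof (cases "q \<le> real N")
    case True
    have e: "q - real t = q - real j + 1" using j1 by (simp add: t_def of_nat_diff)
    show ?thesis using key[unfolded e] True by (simp add: t_def)
  next
    case False
    then have jN: "j = N" by (simp add: j_def)
    then have Nt: "N = Suc t" using j1 by (simp add: t_def)
    define P where "P = (\<Prod>m<N. \<sigma>!m)"
    have Ppos: "P > 0" unfolding P_def using spos by (intro prod_pos) auto
    have PP: "P = (\<Prod>m<t. \<sigma>!m) * \<sigma>!t" unfolding P_def Nt by simp
    have "\<sigma>!t ^ N = (\<Prod>m<N. \<sigma>!t)" by simp
    also have "\<dots> \<le> P" unfolding P_def
    proof (rule prod_mono)
      fix m assume "m \<in> {..<N}"
      then have "\<sigma>!t \<le> \<sigma>!m" using Nt unfolding \<sigma>_def N_def by (simp add: rev_nth sorted_nth_mono)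
      then show "0 \<le> \<sigma>!t \<and> \<sigma>!t \<le> \<sigma>!m" using spos[OF tN] by simp
    qed
    finally have "\<sigma>!t ^ N \<le> P" .
    have "(\<sigma>!t) powr (q - real N) = ((\<sigma>!t) powr real N) powr ((q - real N) / real N)"
      using N0 by (simp add: powr_powr)
    also have "\<dots> \<le> P powr ((q - real N) / real N)"
      using False N0 spos[OF tN] \<open>\<sigma>!t ^ N \<le> P\<close> by (intro powr_mono2) (auto simp: powr_realpow)
    finally have "(\<sigma>!t) powr (q - real N) \<le> P powr ((q - real N) / real N)" .
    have e: "q - real t = 1 + (q - real N)" using Nt by simp
    have "(\<Prod>m<t. \<sigma>!m) * (\<sigma>!t) powr (q - real t) = P * (\<sigma>!t) powr (q - real N)"
      using spos[OF tN] by (simp add: e powr_add PP)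
    also have "\<dots> \<le> P * P powr ((q - real N) / real N)"
      using \<open>(\<sigma>!t) powr (q - real N) \<le> _\<close> Ppos by simp
    also have "\<dots> = P powr (1 + (q - real N) / real N)"
      using Ppos by (simp add: powr_add)
    also have "1 + (q - real N) / real N = q / real N" using N0 by (simp add: field_simps)
    finally show ?thesis using key False jN by (simp add: t_def P_def)
  qed
qed

section \<open>The product space\<close>

text \<open>A complex factor contributes two real coordinates, Re and Im; both carry the
  singular value |a_i| of a complex coefficient.\<close>
datatype coord = Real_coord nat | Re_coord nat | Im_coord nat | Padic_coord nat

definition coords :: "nat \<Rightarrow> nat \<Rightarrow> nat \<Rightarrow> coord list" where
  "coords r s k = map Real_coord [0..<r] @ concat (map (\<lambda>i. [Re_coord i, Im_coord i]) [0..<s])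
                  @ map Padic_coord [0..<k]"

definition coord_abs :: "(nat \<Rightarrow> 'a \<Rightarrow> real) \<Rightarrow> 'a pt \<Rightarrow> coord \<Rightarrow> real" where
  "coord_abs av x c = (case c of
       Real_coord i \<Rightarrow> \<bar>fst x i\<bar>
     | Re_coord i \<Rightarrow> cmod (fst (snd x) i)
     | Im_coord i \<Rightarrow> cmod (fst (snd x) i)
     | Padic_coord j \<Rightarrow> av j (snd (snd x) j))"

definition coord_dist :: "(nat \<Rightarrow> 'a ring) \<Rightarrow> (nat \<Rightarrow> 'a \<Rightarrow> real) \<Rightarrow> coord \<Rightarrow> 'a pt \<Rightarrow> 'a pt \<Rightarrow> real" where
  "coord_dist F av c x y = (case c of
       Real_coord i \<Rightarrow> \<bar>fst x i - fst y i\<bar>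
     | Re_coord i \<Rightarrow> \<bar>Re (fst (snd x) i - fst (snd y) i)\<bar>
     | Im_coord i \<Rightarrow> \<bar>Im (fst (snd x) i - fst (snd y) i)\<bar>
     | Padic_coord j \<Rightarrow> av j (snd (snd x) j \<ominus>\<^bsub>F j\<^esub> snd (snd y) j))"

lemma set_coords:
  "set (coords r s k) = Real_coord ` {..<r} \<union> Re_coord ` {..<s} \<union> Im_coord ` {..<s} \<union> Padic_coord ` {..<k}"
  by (auto simp: coords_def)

lemma ball_coords:
  "(\<forall>c\<in>set (coords r s k). P c) \<longleftrightarrow>
     (\<forall>i<r. P (Real_coord i)) \<and> (\<forall>i<s. P (Re_coord i) \<and> P (Im_coord i)) \<and> (\<forall>j<k. P (Padic_coord j))"
  by (auto simp: set_coords)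

lemma distinct_coords: "distinct (coords r s k)"
proof -
  have "distinct (concat (map (\<lambda>i. [Re_coord i, Im_coord i]) [0..<s]))"
    by (induction s) auto
  then show ?thesis by (auto simp: coords_def distinct_map inj_on_def)
qed

lemma length_coords: "length (coords r s k) = r + 2 * s + k"
  by (simp add: coords_def length_concat comp_def sum_list_triv)

lemma card_set_coords: "card (set (coords r s k)) = r + 2 * s + k"
  using distinct_card[OF distinct_coords] length_coords by simp

lemma sing_vals_eq: "sing_vals r s k av a = rev (sort (map (coord_abs av a) (coords r s k)))"
proof -
  obtain ar ac ap where a: "a = (ar, ac, ap)" by (cases a)
  have "map (coord_abs av a) (concat (map (\<lambda>i. [Re_coord i, Im_coord i]) [0..<s]))
        = concat (map (\<lambda>i. [cmod (ac i), cmod (ac i)]) [0..<s])"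
    by (induction s) (auto simp: a coord_abs_def)
  then show ?thesis by (simp add: sing_vals_def coords_def a coord_abs_def comp_def)
qed

lemma dX_eq_Max:
  "dX r s k F av x y = Max (insert 0 ((\<lambda>c. coord_dist F av c x y) ` set (coords r s k)))"
proof -
  obtain xr xc xp where x: "x = (xr, xc, xp)" by (cases x)
  obtain yr yc yp where y: "y = (yr, yc, yp)" by (cases y)
  show ?thesis
    unfolding dX_def x y prod.case
    by (simp add: set_coords image_Un image_image coord_dist_def setcompr_eq_image lessThan_def Un_assoc)
qed

lemma dX_le_iff:
  "dX r s k F av x y \<le> b \<longleftrightarrow> 0 \<le> b \<and> (\<forall>c\<in>set (coords r s k). coord_dist F av c x y \<le> b)"
  by (simp add: dX_eq_Max)

lemma dX_nonneg: "0 \<le> dX r s k F av x y"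
  and coord_dist_le_dX: "c \<in> set (coords r s k) \<Longrightarrow> coord_dist F av c x y \<le> dX r s k F av x y"
  using dX_le_iff[of r s k F av x y "dX r s k F av x y"] by auto

lemma Xset_iff:
  "(xr, xc, xp) \<in> Xset r s k F \<longleftrightarrow> (\<forall>i\<ge>r. xr i = 0) \<and> (\<forall>i\<ge>s. xc i = 0)
       \<and> (\<forall>j<k. xp j \<in> carrier (F j)) \<and> (\<forall>j\<ge>k. xp j = undefined)"
  by (simp add: Xset_def)

lemma Xset_padic: "x \<in> Xset r s k F \<Longrightarrow> j < k \<Longrightarrow> snd (snd x) j \<in> carrier (F j)"
  by (cases x) (simp add: Xset_iff)

lemma lin_apply_real [simp]: "fst (lin_apply k F a b) i = fst a i * fst b i"
  and lin_apply_complex [simp]: "fst (snd (lin_apply k F a b)) i = fst (snd a) i * fst (snd b) i"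
  and lin_apply_padic [simp]:
    "j < k \<Longrightarrow> snd (snd (lin_apply k F a b)) j = snd (snd a) j \<otimes>\<^bsub>F j\<^esub> snd (snd b) j"
  by (cases a, cases b, simp add: lin_apply_def)+

lemma aff_apply_real [simp]: "fst (aff_apply k F f x) i = fst (fst f) i * fst x i + fst (snd f) i"
  and aff_apply_complex [simp]:
    "fst (snd (aff_apply k F f x)) i = fst (snd (fst f)) i * fst (snd x) i + fst (snd (snd f)) i"
  and aff_apply_padic [simp]: "j < k \<Longrightarrow> snd (snd (aff_apply k F f x)) j
      = snd (snd (fst f)) j \<otimes>\<^bsub>F j\<^esub> snd (snd x) j \<oplus>\<^bsub>F j\<^esub> snd (snd (snd f)) j"
  by (cases f, cases "fst f", cases "snd f", cases x,
      simp add: aff_apply_def lin_apply_def split: prod.split)+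

locale product_space =
  fixes r s k :: nat and F :: "nat \<Rightarrow> 'a ring" and av :: "nat \<Rightarrow> 'a \<Rightarrow> real"
  assumes padic: "\<forall>j<k. is_padic_completion (F j) (av j)"
begin

abbreviation X :: "'a pt set" where "X \<equiv> Xset r s k F"

abbreviation dist_X :: "'a pt \<Rightarrow> 'a pt \<Rightarrow> real" where "dist_X \<equiv> dX r s k F av"

lemma padic_completion_factor: "j < k \<Longrightarrow> padic_completion (F j) (av j)"
  using padic unfolding padic_completion_def padic_completion_axioms_def is_padic_completion_def
  by blast

lemma lin_apply_in_X: "a \<in> X \<Longrightarrow> b \<in> X \<Longrightarrow> lin_apply k F a b \<in> X"
proof -
  assume a: "a \<in> X" and b: "b \<in> X"
  have "snd (snd a) j \<otimes>\<^bsub>F j\<^esub> snd (snd b) j \<in> carrier (F j)" if "j < k" for j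
  proof -
    interpret padic_completion "F j" "av j" using padic_completion_factor[OF that] .
    show ?thesis using Xset_padic[OF a that] Xset_padic[OF b that] by simp
  qed
  then show ?thesis using a b
    by (cases a, cases b) (auto simp: Xset_iff lin_apply_def)
qed

lemma aff_apply_in_X: "fst f \<in> X \<Longrightarrow> snd f \<in> X \<Longrightarrow> x \<in> X \<Longrightarrow> aff_apply k F f x \<in> X"
proof -
  assume a: "fst f \<in> X" and t: "snd f \<in> X" and x: "x \<in> X"
  have l: "lin_apply k F (fst f) x \<in> X" using lin_apply_in_X a x .
  have "snd (snd (lin_apply k F (fst f) x)) j \<oplus>\<^bsub>F j\<^esub> snd (snd (snd f)) j \<in> carrier (F j)"
    if "j < k" for j
  proof -
    interpret padic_completion "F j" "av j" using padic_completion_factor[OF that] .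
    show ?thesis using Xset_padic[OF l that] Xset_padic[OF t that] by simp
  qed
  then show ?thesis using l t
    by (cases "lin_apply k F (fst f) x", cases "snd f") (auto simp: aff_apply_def Xset_iff)
qed

lemma lin_id_in_X: "lin_id r s k F \<in> X"
proof -
  have "\<one>\<^bsub>F j\<^esub> \<in> carrier (F j)" if "j < k" for j
  proof -
    interpret padic_completion "F j" "av j" using padic_completion_factor[OF that] .
    show ?thesis by simp
  qed
  then show ?thesis by (auto simp: lin_id_def Xset_iff)
qed

lemma coord_abs_nonneg: "x \<in> X \<Longrightarrow> c \<in> set (coords r s k) \<Longrightarrow> 0 \<le> coord_abs av x c"
  using padic_completion.av_nonneg[OF padic_completion_factor] Xset_padic[of x r s k F]
  by (auto simp: set_coords coord_abs_def)

lemma coord_abs_lin_apply: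
  assumes "a \<in> X" "b \<in> X" "c \<in> set (coords r s k)"
  shows "coord_abs av (lin_apply k F a b) c = coord_abs av a c * coord_abs av b c"
  using assms padic_completion.av_mult[OF padic_completion_factor]
    Xset_padic[OF assms(1)] Xset_padic[OF assms(2)]
  by (auto simp: set_coords coord_abs_def abs_mult norm_mult)

lemma coord_abs_lin_id: "c \<in> set (coords r s k) \<Longrightarrow> coord_abs av (lin_id r s k F) c = 1"
  using padic_completion.av_one[OF padic_completion_factor]
  by (auto simp: set_coords coord_abs_def lin_id_def)

lemma lin_ok_iff:
  "lin_ok r s k F av a \<longleftrightarrow> a \<in> X \<and> (\<forall>c\<in>set (coords r s k). 0 < coord_abs av a c \<and> coord_abs av a c < 1)"
  by (cases a) (auto simp: lin_ok_def ball_coords coord_abs_def)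

lemma coord_dist_le_coord_abs:
  assumes "x \<in> X" "y \<in> X" "c \<in> set (coords r s k)"
  shows "coord_dist F av c x y \<le> coord_abs av x c + coord_abs av y c"
proof -
  have "\<bar>Re z\<bar> \<le> cmod w + cmod w'" "\<bar>Im z\<bar> \<le> cmod w + cmod w'" if "z = w - w'" for z w w'
    using that abs_Re_le_cmod abs_Im_le_cmod norm_triangle_ineq4 order_trans by blast+
  moreover have "av j (u \<ominus>\<^bsub>F j\<^esub> v) \<le> av j u + av j v"
    if "j < k" "u \<in> carrier (F j)" "v \<in> carrier (F j)" for j u v
  proof -
    interpret padic_completion "F j" "av j" using padic_completion_factor[OF that(1)] .
    show ?thesis using av_diff_le_max[OF that(2,3)] av_nonneg[OF that(2)] av_nonneg[OF that(3)] by linarith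
  qed
  ultimately show ?thesis using assms Xset_padic[OF assms(1)] Xset_padic[OF assms(2)]
    by (auto simp: set_coords coord_dist_def coord_abs_def)
qed

lemma coord_abs_le_dist:
  assumes x: "x \<in> X" and y: "y \<in> X" and c: "c \<in> set (coords r s k)"
  shows "coord_abs av x c \<le> coord_abs av y c + 2 * dist_X x y"
  using c unfolding set_coords
proof (elim UnE imageE)
  fix i assume "i \<in> {..<r}" "c = Real_coord i"
  then show ?thesis
    using coord_dist_le_dX[of "Real_coord i" r s k F av x y] dX_nonneg[of r s k F av x y]
    by (auto simp: set_coords coord_abs_def coord_dist_def)
next
  fix i assume i: "i \<in> {..<s}"
  define z where "z = fst (snd x) i - fst (snd y) i"
  have "\<bar>Re z\<bar> \<le> dist_X x y" "\<bar>Im z\<bar> \<le> dist_X x y"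
    using coord_dist_le_dX[of "Re_coord i" r s k F av x y] coord_dist_le_dX[of "Im_coord i" r s k F av x y] i
    by (auto simp: set_coords coord_dist_def z_def)
  moreover have "cmod (fst (snd x) i) \<le> cmod (fst (snd y) i) + cmod z"
    unfolding z_def by (metis add.commute diff_add_cancel norm_triangle_ineq)
  ultimately have "cmod (fst (snd x) i) \<le> cmod (fst (snd y) i) + 2 * dist_X x y"
    using cmod_le[of z] by linarith
  then show "c = Re_coord i \<Longrightarrow> ?thesis" "c = Im_coord i \<Longrightarrow> ?thesis" by (simp_all add: coord_abs_def)
next
  fix j assume j: "j \<in> {..<k}" "c = Padic_coord j"
  interpret padic_completion "F j" "av j" using padic_completion_factor j by simp
  have xc: "snd (snd x) j \<in> carrier (F j)" and yc: "snd (snd y) j \<in> carrier (F j)"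
    using Xset_padic[OF x] Xset_padic[OF y] j by auto
  have "snd (snd x) j = (snd (snd x) j \<ominus>\<^bsub>F j\<^esub> snd (snd y) j) \<oplus>\<^bsub>F j\<^esub> snd (snd y) j"
    using xc yc by algebra
  then have "av j (snd (snd x) j) \<le> max (av j (snd (snd x) j \<ominus>\<^bsub>F j\<^esub> snd (snd y) j)) (av j (snd (snd y) j))"
    using av_add_le_max[of "snd (snd x) j \<ominus>\<^bsub>F j\<^esub> snd (snd y) j" "snd (snd y) j"] xc yc by simp
  moreover have "av j (snd (snd x) j \<ominus>\<^bsub>F j\<^esub> snd (snd y) j) \<le> dist_X x y"
    using coord_dist_le_dX[of "Padic_coord j" r s k F av x y] j by (auto simp: set_coords coord_dist_def)
  ultimately show ?thesis
    using j av_nonneg[OF yc] dX_nonneg[of r s k F av x y] by (auto simp: coord_abs_def)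
qed

lemma coord_dist_nonneg:
  assumes x: "x \<in> X" and y: "y \<in> X" and c: "c \<in> set (coords r s k)"
  shows "0 \<le> coord_dist F av c x y"
proof -
  have "0 \<le> av j (snd (snd x) j \<ominus>\<^bsub>F j\<^esub> snd (snd y) j)" if j: "j < k" for j
  proof -
    interpret padic_completion "F j" "av j" using padic_completion_factor[OF j] .
    show ?thesis using Xset_padic[OF x j] Xset_padic[OF y j] by (simp add: av_nonneg)
  qed
  then show ?thesis using c by (auto simp: set_coords coord_dist_def)
qed

lemma coord_dist_triangle:
  assumes "x \<in> X" "y \<in> X" "z \<in> X" "c \<in> set (coords r s k)"
  shows "coord_dist F av c x z \<le> coord_dist F av c x y + coord_dist F av c y z"
proof -
  have "av j (u \<ominus>\<^bsub>F j\<^esub> w) \<le> av j (u \<ominus>\<^bsub>F j\<^esub> v) + av j (v \<ominus>\<^bsub>F j\<^esub> w)"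
    if "j < k" "u \<in> carrier (F j)" "v \<in> carrier (F j)" "w \<in> carrier (F j)" for j u v w
  proof -
    interpret padic_completion "F j" "av j" using padic_completion_factor[OF that(1)] .
    have "u \<ominus>\<^bsub>F j\<^esub> w = (u \<ominus>\<^bsub>F j\<^esub> v) \<oplus>\<^bsub>F j\<^esub> (v \<ominus>\<^bsub>F j\<^esub> w)" using that(2-4) by algebra
    moreover have uv: "u \<ominus>\<^bsub>F j\<^esub> v \<in> carrier (F j)" and vw: "v \<ominus>\<^bsub>F j\<^esub> w \<in> carrier (F j)"
      using that(2-4) by simp_all
    ultimately have "av j (u \<ominus>\<^bsub>F j\<^esub> w) \<le> max (av j (u \<ominus>\<^bsub>F j\<^esub> v)) (av j (v \<ominus>\<^bsub>F j\<^esub> w))"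
      using av_add_le_max[OF uv vw] by simp
    then show ?thesis using av_nonneg[OF uv] av_nonneg[OF vw] by linarith
  qed
  then show ?thesis using assms Xset_padic[OF assms(1)] Xset_padic[OF assms(2)] Xset_padic[OF assms(3)]
    by (auto simp: set_coords coord_dist_def)
qed

lemma dX_triangle: "x \<in> X \<Longrightarrow> y \<in> X \<Longrightarrow> z \<in> X \<Longrightarrow> dist_X x z \<le> dist_X x y + dist_X y z"
  unfolding dX_le_iff[of _ _ _ _ _ x z]
  using coord_dist_triangle coord_dist_le_dX dX_nonneg by (smt (verit, best))

lemma dcompact_bounded:
  assumes S: "dcompact r s k F av S" and x0: "x0 \<in> S"
  shows "\<exists>B. \<forall>x\<in>S. dist_X x x0 \<le> B"
proof (rule ccontr)
  assume "\<not> ?thesis"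
  then have "\<forall>m::nat. \<exists>x\<in>S. dist_X x x0 > real m" by (meson not_le)
  then obtain xs where xs: "\<And>m. xs m \<in> S" "\<And>m. dist_X (xs m) x0 > real m" by metis
  obtain l \<sigma> where l: "l \<in> S" "strict_mono \<sigma>" "(\<lambda>m. dist_X (xs (\<sigma> m)) l) \<longlonglongrightarrow> 0"
    using S xs(1) unfolding dcompact_def by blast
  have SX: "S \<subseteq> X" using S unfolding dcompact_def by blast
  obtain M where M: "\<And>m. m \<ge> M \<Longrightarrow> dist_X (xs (\<sigma> m)) l < 1"
    using LIMSEQ_D[OF l(3), of 1] dX_nonneg by fastforce
  obtain m where m: "m \<ge> M" "real m > 1 + dist_X l x0"
    by (metis add.commute le_add2 less_le_not_le nat_le_linear of_nat_le_iff order.strict_trans2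
        reals_Archimedean2)
  have "real m \<le> real (\<sigma> m)" using l(2) by (simp add: seq_suble)
  moreover have "dist_X (xs (\<sigma> m)) x0 \<le> dist_X (xs (\<sigma> m)) l + dist_X l x0"
    using dX_triangle SX xs(1) l(1) x0 by blast
  ultimately show False using M[OF m(1)] xs(2)[of "\<sigma> m"] m(2) by linarith
qed

lemma dcompact_coord_bounded:
  assumes "dcompact r s k F av S"
  shows "\<exists>D. \<forall>x\<in>S. \<forall>c\<in>set (coords r s k). coord_abs av x c \<le> D"
proof (cases "S = {}")
  case False
  then obtain x0 where x0: "x0 \<in> S" by blast
  obtain B where B: "\<And>x. x \<in> S \<Longrightarrow> dist_X x x0 \<le> B" using dcompact_bounded[OF assms x0] by blast
  have SX: "S \<subseteq> X" using assms unfolding dcompact_def by blast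
  define D0 where "D0 = (\<Sum>c\<in>set (coords r s k). coord_abs av x0 c)"
  have "coord_abs av x0 c \<le> D0" if "c \<in> set (coords r s k)" for c
    unfolding D0_def using that coord_abs_nonneg[of x0] SX x0 by (intro member_le_sum) auto
  then have "\<forall>x\<in>S. \<forall>c\<in>set (coords r s k). coord_abs av x c \<le> D0 + 2 * B"
    using coord_abs_le_dist SX x0 B by (smt (verit, best) subsetD)
  then show ?thesis by blast
qed simp

definition box :: "real \<Rightarrow> 'a pt set" where
  "box D = {x \<in> X. \<forall>c\<in>set (coords r s k). coord_abs av x c \<le> D}"

lemma linearly_coverable_box_coord:
  assumes D: "D \<ge> 0" and c: "c \<in> set (coords r s k)"
  shows "\<exists>C. linearly_coverable (coord_dist F av c) (box D) C"
  using c unfolding set_coords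
proof (elim UnE imageE)
  fix i assume "i \<in> {..<r}" and ci: "c = Real_coord i"
  then have "(\<lambda>x. fst x i) ` box D \<subseteq> {t. \<bar>t\<bar> \<le> D}"
    by (auto simp: box_def ball_coords coord_abs_def)
  then have "linearly_coverable (coord_dist F av c) (box D) (2 * D + 2)"
    by (rule linearly_coverable_vimage[OF linearly_coverable_interval[OF D]]) (simp add: ci coord_dist_def)
  then show ?thesis by blast
next
  fix i assume "i \<in> {..<s}" and ci: "c = Re_coord i"
  then have "(\<lambda>x. Re (fst (snd x) i)) ` box D \<subseteq> {t. \<bar>t\<bar> \<le> D}"
    using abs_Re_le_cmod order_trans by (fastforce simp: box_def ball_coords coord_abs_def)
  then have "linearly_coverable (coord_dist F av c) (box D) (2 * D + 2)"
    by (rule linearly_coverable_vimage[OF linearly_coverable_interval[OF D]]) (simp add: ci coord_dist_def)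
  then show ?thesis by blast
next
  fix i assume "i \<in> {..<s}" and ci: "c = Im_coord i"
  then have "(\<lambda>x. Im (fst (snd x) i)) ` box D \<subseteq> {t. \<bar>t\<bar> \<le> D}"
    using abs_Im_le_cmod order_trans by (fastforce simp: box_def ball_coords coord_abs_def)
  then have "linearly_coverable (coord_dist F av c) (box D) (2 * D + 2)"
    by (rule linearly_coverable_vimage[OF linearly_coverable_interval[OF D]]) (simp add: ci coord_dist_def)
  then show ?thesis by blast
next
  fix j assume j: "j \<in> {..<k}" and cj: "c = Padic_coord j"
  interpret padic_completion "F j" "av j" using padic_completion_factor j by simp
  obtain C where "linearly_coverable (\<lambda>x y. av j (x \<ominus>\<^bsub>F j\<^esub> y)) {x \<in> carrier (F j). av j x \<le> D} C"
    using linearly_coverable_ball by blast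
  moreover have "(\<lambda>x. snd (snd x) j) ` box D \<subseteq> {x \<in> carrier (F j). av j x \<le> D}"
    using j Xset_padic by (auto simp: box_def ball_coords coord_abs_def)
  ultimately have "linearly_coverable (coord_dist F av c) (box D) C"
    by (rule linearly_coverable_vimage) (simp add: cj coord_dist_def)
  then show ?thesis by blast
qed

lemma linearly_coverable_box:
  assumes "D \<ge> 0"
  obtains C where "C \<ge> 1" "\<And>c. c \<in> set (coords r s k) \<Longrightarrow> linearly_coverable (coord_dist F av c) (box D) C"
proof -
  obtain C where C: "\<And>c. c \<in> set (coords r s k) \<Longrightarrow> linearly_coverable (coord_dist F av c) (box D) (C c)"
    using linearly_coverable_box_coord[OF assms] by metis
  define C' where "C' = 1 + (\<Sum>c\<in>set (coords r s k). \<bar>C c\<bar>)"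
  have "C c \<le> C'" if "c \<in> set (coords r s k)" for c
  proof -
    have "\<bar>C c\<bar> \<le> (\<Sum>c\<in>set (coords r s k). \<bar>C c\<bar>)" using that by (intro member_le_sum) auto
    then show ?thesis unfolding C'_def by linarith
  qed
  moreover have "C' \<ge> 1" unfolding C'_def by (simp add: sum_nonneg)
  ultimately show thesis using that C linearly_coverable_mono by blast
qed

lemma box_codes:
  assumes C: "\<And>c. c \<in> set (coords r s k) \<Longrightarrow> linearly_coverable (coord_dist F av c) (box D) C"
    and \<alpha>: "\<And>c. c \<in> set (coords r s k) \<Longrightarrow> \<alpha> c > 0" and \<beta>: "\<beta> > 0"
  shows "\<exists>idx :: 'a pt \<Rightarrow> coord \<Rightarrow> int. finite (idx ` box D)
           \<and> real (card (idx ` box D)) \<le> C ^ (r + 2 * s + k) * (\<Prod>c\<in>set (coords r s k). max 1 (\<alpha> c / \<beta>))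
           \<and> (\<forall>x\<in>box D. \<forall>y\<in>box D. idx x = idx y
                \<longrightarrow> (\<forall>c\<in>set (coords r s k). \<alpha> c * coord_dist F av c x y \<le> \<beta>))"
proof -
  have "\<forall>c\<in>set (coords r s k). \<exists>g :: 'a pt \<Rightarrow> int. finite (g ` box D)
          \<and> real (card (g ` box D)) \<le> C * max 1 (\<alpha> c / \<beta>)
          \<and> (\<forall>x\<in>box D. \<forall>y\<in>box D. g x = g y \<longrightarrow> \<alpha> c * coord_dist F av c x y \<le> \<beta>)"
  proof
    fix c assume c: "c \<in> set (coords r s k)"
    have "\<beta> / \<alpha> c > 0" using \<alpha>[OF c] \<beta> by simp
    then obtain g :: "'a pt \<Rightarrow> int" where g: "finite (g ` box D)"
      "real (card (g ` box D)) \<le> C * max 1 (1 / (\<beta> / \<alpha> c))"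
      "\<forall>x\<in>box D. \<forall>y\<in>box D. g x = g y \<longrightarrow> coord_dist F av c x y \<le> \<beta> / \<alpha> c"
      using C[OF c, unfolded linearly_coverable_def, rule_format] by blast
    have "\<forall>x\<in>box D. \<forall>y\<in>box D. g x = g y \<longrightarrow> \<alpha> c * coord_dist F av c x y \<le> \<beta>"
      using g(3) \<alpha>[OF c] by (simp add: pos_le_divide_eq mult.commute)
    then show "\<exists>g :: 'a pt \<Rightarrow> int. finite (g ` box D)
          \<and> real (card (g ` box D)) \<le> C * max 1 (\<alpha> c / \<beta>)
          \<and> (\<forall>x\<in>box D. \<forall>y\<in>box D. g x = g y \<longrightarrow> \<alpha> c * coord_dist F av c x y \<le> \<beta>)"
      using g(1,2) by auto
  qed
  from bchoice[OF this] obtain g :: "coord \<Rightarrow> 'a pt \<Rightarrow> int"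
    where g: "\<forall>c\<in>set (coords r s k). finite (g c ` box D)
          \<and> real (card (g c ` box D)) \<le> C * max 1 (\<alpha> c / \<beta>)
          \<and> (\<forall>x\<in>box D. \<forall>y\<in>box D. g c x = g c y \<longrightarrow> \<alpha> c * coord_dist F av c x y \<le> \<beta>)"
    by blast
  define idx where "idx x = restrict (\<lambda>c. g c x) (set (coords r s k))" for x
  show ?thesis
  proof (intro exI[of _ idx] conjI ballI impI)
    show "finite (idx ` box D)" unfolding idx_def by (rule finite_image_restrict) (use g in auto)
    have "card (idx ` box D) \<le> (\<Prod>c\<in>set (coords r s k). card (g c ` box D))"
      unfolding idx_def by (rule card_image_restrict_le_prod) (use g in auto)
    then have "real (card (idx ` box D)) \<le> (\<Prod>c\<in>set (coords r s k). real (card (g c ` box D)))"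
      by (metis of_nat_le_iff of_nat_prod)
    also have "\<dots> \<le> (\<Prod>c\<in>set (coords r s k). C * max 1 (\<alpha> c / \<beta>))"
      using g by (intro prod_mono) auto
    also have "\<dots> = C ^ (r + 2 * s + k) * (\<Prod>c\<in>set (coords r s k). max 1 (\<alpha> c / \<beta>))"
      by (simp add: prod.distrib card_set_coords)
    finally show "real (card (idx ` box D)) \<le> C ^ (r + 2 * s + k) * (\<Prod>c\<in>set (coords r s k). max 1 (\<alpha> c / \<beta>))" .
  next
    fix x y c assume "x \<in> box D" "y \<in> box D" "idx x = idx y" "c \<in> set (coords r s k)"
    moreover from this have "g c x = g c y" unfolding idx_def by (metis restrict_apply')
    ultimately show "\<alpha> c * coord_dist F av c x y \<le> \<beta>" using g by blast
  qed
qed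

lemma Phi_ge_covering_cost:
  assumes q: "q > 0" and N: "r + 2 * s + k > 0"
    and pos: "\<And>c. c \<in> set (coords r s k) \<Longrightarrow> 0 < coord_abs av a c"
  shows "\<exists>\<beta>>0. (\<Prod>c\<in>set (coords r s k). max 1 (coord_abs av a c / \<beta>)) * \<beta> powr q
                \<le> Phi r s k av q a"
proof -
  define xs where "xs = map (coord_abs av a) (coords r s k)"
  define j where "j = (if q \<le> real (length xs) then nat \<lceil>q\<rceil> else length xs)"
  define \<beta> where "\<beta> = rev (sort xs) ! (j - 1)"
  have xpos: "\<forall>x\<in>set xs. x > 0" using pos unfolding xs_def by auto
  have lx: "length xs = r + 2 * s + k" unfolding xs_def by (simp add: length_coords)
  have "1 \<le> j" "j \<le> length xs" using q N lx unfolding j_def by (auto simp: Suc_le_eq)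
  then have "\<beta> \<in> set xs" unfolding \<beta>_def by (metis diff_less le_less_trans length_rev length_sort
      less_one not_le nth_mem set_rev set_sort)
  then have bpos: "\<beta> > 0" using xpos by auto
  have ne: "xs \<noteq> []" using lx N by auto
  have Phi: "Phi r s k av q a = (if q \<le> real (length xs)
      then (\<Prod>m<j-1. rev (sort xs) ! m) * (rev (sort xs) ! (j-1)) powr (q - real j + 1)
      else (\<Prod>m<length xs. rev (sort xs) ! m) powr (q / real (length xs)))"
    using q unfolding Phi_def sing_vals_eq xs_def[symmetric] j_def by (simp add: Let_def)
  have "(\<Prod>c\<in>set (coords r s k). max 1 (coord_abs av a c / \<beta>)) = prod_list (map (\<lambda>x. max 1 (x / \<beta>)) xs)"
    unfolding xs_def using distinct_coords by (simp add: prod.distinct_set_conv_list comp_def)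
  also have "\<dots> * \<beta> powr q \<le> Phi r s k av q a"
    using prod_max_one_div_powr_le_sv_function[OF xpos ne q] by (simp only: Phi \<beta>_def j_def)
  finally show ?thesis using bpos by blast
qed

lemma hausdorff_eq_0_if_dim_0:
  assumes N: "r + 2 * s + k = 0" and q: "q > 0" and A: "A \<subseteq> X"
  shows "hausdorff r s k F av q A = 0"
proof -
  have "set (coords r s k) = {}" using N length_coords[of r s k] by simp
  then have d0: "dist_X x y = 0" for x y by (simp add: dX_eq_Max)
  have diam0: "diam_pow dist_X U q = 0" for U
  proof (cases "U = {}")
    case False
    then have "diam_set dist_X U = 0" using diam_set_le[OF False, of dist_X 0] d0 by simp
    then show ?thesis using False q by (simp add: diam_pow_def)
  qed (simp add: diam_pow_def)
  have "hcontent dist_X X q \<delta> A \<le> (\<Sum>m. ennreal 0)" if "\<delta> > 0" for \<delta>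
  proof (rule hcontent_le_suminf[where B = "\<lambda>m. if m = 0 then A else {}"])
    show "A \<subseteq> (\<Union>m. if m = 0 then A else {})" by auto
    fix m :: nat
    show "\<exists>Ps. (if m = 0 then A else {}) \<subseteq> \<Union>(set Ps)
            \<and> (\<forall>P\<in>set Ps. P \<subseteq> X \<and> (\<forall>x\<in>P. \<forall>y\<in>P. dist_X x y \<le> \<delta>))
            \<and> (\<Sum>P\<leftarrow>Ps. diam_pow dist_X P q) \<le> 0"
      using A that by (intro exI[of _ "[if m = 0 then A else {}]"]) (simp add: d0 diam0)
  qed
  then show ?thesis unfolding hausdorff_eq_SUP_hcontent by simp
qed

end

section \<open>The path space\<close>

definition aff_path :: "nat \<Rightarrow> (nat \<Rightarrow> 'a ring) \<Rightarrow> 'a edge list \<Rightarrow> 'a pt \<Rightarrow> 'a pt" where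
  "aff_path k F w x = foldr (\<lambda>e. aff_apply k F (elab e)) w x"

lemma aff_path_Nil [simp]: "aff_path k F [] x = x"
  and aff_path_Cons [simp]: "aff_path k F (e # w) x = aff_apply k F (elab e) (aff_path k F w x)"
  by (simp_all add: aff_path_def)

lemma aff_path_append: "aff_path k F (v @ u) x = aff_path k F v (aff_path k F u x)"
  by (simp add: aff_path_def)

lemma T_path_Nil [simp]: "T_path r s k F [] = lin_id r s k F"
  and T_path_Cons [simp]: "T_path r s k F (e # w) = lin_apply k F (fst (elab e)) (T_path r s k F w)"
  by (simp_all add: T_path_def lin_comp_def)

lemma aff_path_diff_real:
  "i < r \<Longrightarrow> fst (aff_path k F w x) i - fst (aff_path k F w y) i = fst (T_path r s k F w) i * (fst x i - fst y i)"
proof (induction w)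
  case (Cons e w)
  have "fst (aff_path k F (e # w) x) i - fst (aff_path k F (e # w) y) i
     = fst (fst (elab e)) i * (fst (aff_path k F w x) i - fst (aff_path k F w y) i)"
    by (simp add: right_diff_distrib)
  then show ?case using Cons by (simp add: mult.assoc)
qed (simp add: lin_id_def)

lemma aff_path_diff_complex:
  "i < s \<Longrightarrow> fst (snd (aff_path k F w x)) i - fst (snd (aff_path k F w y)) i
     = fst (snd (T_path r s k F w)) i * (fst (snd x) i - fst (snd y) i)"
proof (induction w)
  case (Cons e w)
  have "fst (snd (aff_path k F (e # w) x)) i - fst (snd (aff_path k F (e # w) y)) i
     = fst (snd (fst (elab e))) i * (fst (snd (aff_path k F w x)) i - fst (snd (aff_path k F w y)) i)"
    by (simp add: right_diff_distrib)
  then show ?case using Cons by (simp add: mult.assoc)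
qed (simp add: lin_id_def)


lemma nu_zero_exponent: "nu r s k F av n G \<eta>0 0 A = \<infinity>"
proof -
  have top: "(\<Sum>i::nat. 1::ennreal) = \<infinity>"
  proof (rule ccontr)
    assume "(\<Sum>i::nat. 1::ennreal) \<noteq> \<infinity>"
    then obtain m where "(\<Sum>i::nat. 1::ennreal) < of_nat m"
      using ennreal_Ex_less_of_nat by (auto simp: top.not_eq_extremum infinity_ennreal_def)
    moreover have "(\<Sum>i<m. 1::ennreal) \<le> (\<Sum>i::nat. 1::ennreal)" by (rule sum_le_suminf) auto
    ultimately show False by simp
  qed
  then show ?thesis unfolding nu_def by (simp add: Phi_def top_unique)
qed

lemma nu_less_cover:
  fixes F :: "nat \<Rightarrow> 'a ring"
  assumes "nu r s k F av n G \<eta>0 q A < B" and "\<delta> > 0"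
  obtains c where "\<And>m. c m \<in> Efin n G" "\<And>m. diam_set (dE \<eta>0) (cyl n G (c m)) \<le> \<delta>"
    "A \<subseteq> (\<Union>m. cyl n G (c m))" "(\<Sum>m. ennreal (Phi r s k av q (T_path r s k F (c m)))) < B"
proof -
  define CS where "CS = {c :: nat \<Rightarrow> 'a edge list.
      (\<forall>i. c i \<in> Efin n G \<and> diam_set (dE \<eta>0) (cyl n G (c i)) \<le> \<delta>) \<and> A \<subseteq> (\<Union>i. cyl n G (c i))}"
  have "(INF c\<in>CS. \<Sum>i. ennreal (Phi r s k av q (T_path r s k F (c i)))) \<le> nu r s k F av n G \<eta>0 q A"
    unfolding nu_def CS_def using assms(2) by (intro SUP_upper) auto
  then have "(INF c\<in>CS. \<Sum>i. ennreal (Phi r s k av q (T_path r s k F (c i)))) < B"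
    using assms(1) by (rule order.strict_trans1)
  then obtain c where "c \<in> CS" "(\<Sum>i. ennreal (Phi r s k av q (T_path r s k F (c i)))) < B"
    by (auto simp: INF_less_iff)
  then show thesis using that unfolding CS_def by blast
qed

lemma dE_le_1: "\<eta>0 > 1 \<Longrightarrow> dE \<eta>0 x y \<le> 1"
  unfolding dE_def by (auto simp: powr_minus_divide ge_one_powr_ge_zero)

lemma dE_le_diam_set:
  assumes "\<eta>0 > 1" "x \<in> S" "y \<in> S"
  shows "dE \<eta>0 x y \<le> diam_set (dE \<eta>0) S"
proof -
  have bdd: "bdd_above {dE \<eta>0 x y | x y. x \<in> S \<and> y \<in> S}"
    using dE_le_1[OF assms(1)] by (auto intro!: bdd_aboveI)
  have "dE \<eta>0 x y \<le> Sup {dE \<eta>0 x y | x y. x \<in> S \<and> y \<in> S}"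
    using assms by (intro cSup_upper[OF _ bdd]) blast
  then show ?thesis using assms unfolding diam_set_def by auto
qed

lemma cyl_elems_agree:
  assumes \<eta>: "\<eta>0 > 1" and \<omega>: "\<omega> \<in> cyl n G c" and \<omega>': "\<omega>' \<in> cyl n G c"
    and diam: "diam_set (dE \<eta>0) (cyl n G c) \<le> \<eta>0 powr (- real L)" and j: "j < max (length c) L"
  shows "\<omega> j = \<omega>' j"
proof (cases "j < length c")
  case True
  then show ?thesis using \<omega> \<omega>' unfolding cyl_def by auto
next
  case False
  show ?thesis
  proof (rule ccontr)
    assume ne: "\<omega> j \<noteq> \<omega>' j"
    define m where "m = (LEAST t. \<omega> t \<noteq> \<omega>' t)"
    have "m \<le> j" unfolding m_def using ne by (rule Least_le)
    have "\<eta>0 powr (- real m) = dE \<eta>0 \<omega> \<omega>'" using ne unfolding dE_def m_def by auto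
    also have "\<dots> \<le> \<eta>0 powr (- real L)" using dE_le_diam_set[OF \<eta> \<omega> \<omega>'] diam by linarith
    finally have "- real m \<le> - real L" using \<eta> by simp
    then show False using \<open>m \<le> j\<close> False j by simp
  qed
qed

section \<open>Graph-directed iterated function systems\<close>

locale gifs = product_space r s k F av
  for r s k :: nat and F :: "nat \<Rightarrow> 'a ring" and av :: "nat \<Rightarrow> 'a \<Rightarrow> real" +
  fixes n :: nat and G :: "nat \<Rightarrow> nat \<Rightarrow> ('a pt \<times> 'a pt) set" and \<Omega> :: "nat \<Rightarrow> 'a pt set"
  assumes finite_G: "\<forall>i<n. \<forall>j<n. finite (G i j)"
    and maps: "\<forall>i<n. \<forall>j<n. \<forall>f\<in>G i j. lin_ok r s k F av (fst f) \<and> snd f \<in> Xset r s k F"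
    and nonempty: "\<forall>i<n. \<Omega> i \<noteq> {}"
    and compact: "\<forall>i<n. dcompact r s k F av (\<Omega> i)"
    and solution: "\<forall>i<n. \<Omega> i = (\<Union>j<n. \<Union>f\<in>G i j. aff_apply k F f ` \<Omega> j)"
begin

abbreviation E :: "'a edge set" where "E \<equiv> edges n G"

definition cell :: "'a edge list \<Rightarrow> 'a pt set" where
  "cell w = aff_path k F w ` \<Omega> (etgt (last w))"

lemma edge_props:
  assumes "e \<in> E"
  shows "lin_ok r s k F av (fst (elab e)) \<and> snd (elab e) \<in> X \<and> etgt e < n"
proof -
  obtain i j f where e: "e = (i, j, f)" by (cases e)
  then have "i < n" "j < n" "f \<in> G i j" using assms by (auto simp: edges_def)
  then show ?thesis using maps by (simp add: e elab_def etgt_def)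
qed

lemma edge_lin_ok: "e \<in> E \<Longrightarrow> lin_ok r s k F av (fst (elab e))"
  and edge_translation: "e \<in> E \<Longrightarrow> snd (elab e) \<in> X"
  and edge_etgt: "e \<in> E \<Longrightarrow> etgt e < n"
  by (simp_all add: edge_props)

lemma finite_E: "finite E"
proof -
  have "E \<subseteq> (\<Union>i<n. \<Union>j<n. (\<lambda>f. (i, j, f)) ` G i j)" by (auto simp: edges_def)
  then show ?thesis using finite_G by (auto intro: finite_subset)
qed

lemma Omega_subset_X: "j < n \<Longrightarrow> \<Omega> j \<subseteq> X"
  using compact unfolding dcompact_def by blast

lemma Efin_edges: "w \<in> Efin n G \<Longrightarrow> set w \<subseteq> E"
  by (simp add: Efin_def)

lemma Efin_etgt_last: "w \<in> Efin n G \<Longrightarrow> w \<noteq> [] \<Longrightarrow> etgt (last w) < n"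
  using Efin_edges edge_etgt last_in_set by blast

lemma T_path_in_X: "set w \<subseteq> E \<Longrightarrow> T_path r s k F w \<in> X"
  by (induction w) (auto simp: lin_id_in_X lin_apply_in_X lin_ok_iff dest: edge_lin_ok)

lemma aff_path_in_X: "set w \<subseteq> E \<Longrightarrow> x \<in> X \<Longrightarrow> aff_path k F w x \<in> X"
  by (induction w) (auto simp: lin_ok_iff intro!: aff_apply_in_X dest: edge_lin_ok edge_translation)

lemma cell_subset_X: "w \<in> Efin n G \<Longrightarrow> w \<noteq> [] \<Longrightarrow> cell w \<subseteq> X"
  unfolding cell_def using aff_path_in_X Efin_edges Omega_subset_X Efin_etgt_last by blast

lemma aff_path_diff_padic:
  assumes w: "set w \<subseteq> E" and x: "x \<in> X" and y: "y \<in> X" and j: "j < k"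
  shows "snd (snd (aff_path k F w x)) j \<ominus>\<^bsub>F j\<^esub> snd (snd (aff_path k F w y)) j
     = snd (snd (T_path r s k F w)) j \<otimes>\<^bsub>F j\<^esub> (snd (snd x) j \<ominus>\<^bsub>F j\<^esub> snd (snd y) j)"
  using w
proof (induction w)
  case Nil
  interpret padic_completion "F j" "av j" using padic_completion_factor[OF j] .
  show ?case using Xset_padic[OF x j] Xset_padic[OF y j] j by (simp add: lin_id_def)
next
  case (Cons e w)
  interpret padic_completion "F j" "av j" using padic_completion_factor[OF j] .
  have w: "set w \<subseteq> E" and e: "e \<in> E" using Cons.prems by auto
  have "fst (elab e) \<in> X" using edge_lin_ok[OF e] by (simp add: lin_ok_iff)
  then have a: "snd (snd (fst (elab e))) j \<in> carrier (F j)"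
    and t: "snd (snd (snd (elab e))) j \<in> carrier (F j)"
    using Xset_padic[OF _ j] edge_translation[OF e] by blast+
  have u: "snd (snd (aff_path k F w x)) j \<in> carrier (F j)" "snd (snd (aff_path k F w y)) j \<in> carrier (F j)"
    using Xset_padic[OF aff_path_in_X[OF w] j] x y by auto
  have T: "snd (snd (T_path r s k F w)) j \<in> carrier (F j)" using Xset_padic[OF T_path_in_X[OF w] j] .
  have d: "snd (snd x) j \<ominus>\<^bsub>F j\<^esub> snd (snd y) j \<in> carrier (F j)"
    using Xset_padic[OF x j] Xset_padic[OF y j] by simp
  define a' where "a' = snd (snd (fst (elab e))) j"
  define u1 where "u1 = snd (snd (aff_path k F w x)) j"
  define u2 where "u2 = snd (snd (aff_path k F w y)) j"
  have "a' \<otimes>\<^bsub>F j\<^esub> u1 \<oplus>\<^bsub>F j\<^esub> snd (snd (snd (elab e))) j \<ominus>\<^bsub>F j\<^esub> (a' \<otimes>\<^bsub>F j\<^esub> u2 \<oplus>\<^bsub>F j\<^esub> snd (snd (snd (elab e))) j)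
      = a' \<otimes>\<^bsub>F j\<^esub> (u1 \<ominus>\<^bsub>F j\<^esub> u2)"
    using a t u unfolding a'_def u1_def u2_def by algebra
  then show ?case using Cons.IH[OF w] j a T d unfolding a'_def u1_def u2_def by (simp add: m_assoc)
qed

lemma coord_abs_T_path_Cons:
  assumes "e \<in> E" "set w \<subseteq> E" "c \<in> set (coords r s k)"
  shows "coord_abs av (T_path r s k F (e # w)) c = coord_abs av (fst (elab e)) c * coord_abs av (T_path r s k F w) c"
  using assms edge_lin_ok[OF assms(1)] by (simp add: coord_abs_lin_apply T_path_in_X lin_ok_iff)

definition contraction :: real where
  "contraction = Max (insert 0 ((\<lambda>(e, c). coord_abs av (fst (elab e)) c) ` (E \<times> set (coords r s k))))"

lemma contraction_nonneg: "0 \<le> contraction"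
  and contraction_less_1: "contraction < 1"
  and coord_abs_edge_le_contraction:
    "e \<in> E \<Longrightarrow> c \<in> set (coords r s k) \<Longrightarrow> coord_abs av (fst (elab e)) c \<le> contraction"
proof -
  let ?A = "insert 0 ((\<lambda>(e, c). coord_abs av (fst (elab e)) c) ` (E \<times> set (coords r s k)))"
  have fin: "finite ?A" using finite_E by simp
  show "0 \<le> contraction" unfolding contraction_def using fin by simp
  show "contraction < 1" unfolding contraction_def using fin
    by (auto simp: Max_less_iff lin_ok_iff dest: edge_lin_ok)
  show "coord_abs av (fst (elab e)) c \<le> contraction" if "e \<in> E" "c \<in> set (coords r s k)"
    unfolding contraction_def using fin that by (intro Max_ge) force+
qed

lemma coord_abs_T_path_bounds:
  assumes "set w \<subseteq> E" "c \<in> set (coords r s k)"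
  shows "0 < coord_abs av (T_path r s k F w) c \<and> coord_abs av (T_path r s k F w) c \<le> contraction ^ length w"
  using assms(1)
proof (induction w)
  case (Cons e w)
  then have e: "e \<in> E" and w: "set w \<subseteq> E" by auto
  have "0 < coord_abs av (fst (elab e)) c" using edge_lin_ok[OF e] assms(2) by (simp add: lin_ok_iff)
  then show ?case using Cons.IH[OF w] coord_abs_T_path_Cons[OF e w assms(2)]
      coord_abs_edge_le_contraction[OF e assms(2)]
    by (auto intro: mult_mono)
qed (simp add: coord_abs_lin_id assms(2))

lemma coord_abs_T_path_pos:
  "set w \<subseteq> E \<Longrightarrow> c \<in> set (coords r s k) \<Longrightarrow> 0 < coord_abs av (T_path r s k F w) c"
  and coord_abs_T_path_le:
  "set w \<subseteq> E \<Longrightarrow> c \<in> set (coords r s k) \<Longrightarrow> coord_abs av (T_path r s k F w) c \<le> contraction ^ length w"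
  using coord_abs_T_path_bounds by blast+

lemma coord_abs_T_path_append_le:
  assumes "set (v @ u) \<subseteq> E" and c: "c \<in> set (coords r s k)"
  shows "coord_abs av (T_path r s k F (v @ u)) c \<le> coord_abs av (T_path r s k F v) c"
  using assms(1)
proof (induction v)
  case Nil
  then have "coord_abs av (T_path r s k F u) c \<le> contraction ^ length u"
    using coord_abs_T_path_le c by simp
  also have "\<dots> \<le> 1" using contraction_nonneg contraction_less_1 by (simp add: power_le_one)
  finally show ?case using c by (simp add: coord_abs_lin_id)
next
  case (Cons e v)
  then have e: "e \<in> E" and vu: "set (v @ u) \<subseteq> E" by auto
  have "0 < coord_abs av (fst (elab e)) c" using edge_lin_ok[OF e] c by (simp add: lin_ok_iff)
  then show ?case
    using Cons.IH[OF vu] coord_abs_T_path_Cons[OF e vu c] coord_abs_T_path_Cons[OF e _ c] vu by simp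
qed

text \<open>f_\<omega> x - f_\<omega> y = T_\<omega> (x - y) coordinatewise; the factor 2 is only needed for the complex
  factors, where a rotation mixes the real and imaginary parts.\<close>
lemma dX_aff_path_le:
  assumes w: "set w \<subseteq> E" and x: "x \<in> X" and y: "y \<in> X" and b: "0 \<le> b"
    and close: "\<And>c. c \<in> set (coords r s k)
                  \<Longrightarrow> coord_abs av (T_path r s k F w) c * coord_dist F av c x y \<le> b"
  shows "dist_X (aff_path k F w x) (aff_path k F w y) \<le> 2 * b"
  unfolding dX_le_iff ball_coords
proof (intro conjI allI impI)
  show "0 \<le> 2 * b" using b by simp
next
  fix i assume i: "i < r"
  have "\<bar>fst (aff_path k F w x) i - fst (aff_path k F w y) i\<bar> = \<bar>fst (T_path r s k F w) i\<bar> * \<bar>fst x i - fst y i\<bar>"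
    unfolding aff_path_diff_real[OF i, where s = s] by (simp add: abs_mult)
  then show "coord_dist F av (Real_coord i) (aff_path k F w x) (aff_path k F w y) \<le> 2 * b"
    using close[of "Real_coord i"] b i by (simp add: coord_dist_def coord_abs_def set_coords)
next
  fix i assume i: "i < s"
  define t where "t = fst (snd (T_path r s k F w)) i"
  define z where "z = fst (snd x) i - fst (snd y) i"
  have "cmod (t * z) \<le> cmod t * \<bar>Re z\<bar> + cmod t * \<bar>Im z\<bar>"
    using cmod_le[of z] by (simp add: norm_mult distrib_left[symmetric] mult_left_mono)
  also have "\<dots> \<le> 2 * b"
    using close[of "Re_coord i"] close[of "Im_coord i"] i
    by (simp add: coord_dist_def coord_abs_def set_coords t_def z_def)
  finally have "cmod (t * z) \<le> 2 * b" .
  moreover have "fst (snd (aff_path k F w x)) i - fst (snd (aff_path k F w y)) i = t * z"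
    using aff_path_diff_complex[OF i] unfolding t_def z_def .
  ultimately show "coord_dist F av (Re_coord i) (aff_path k F w x) (aff_path k F w y) \<le> 2 * b"
    "coord_dist F av (Im_coord i) (aff_path k F w x) (aff_path k F w y) \<le> 2 * b"
    using abs_Re_le_cmod[of "t * z"] abs_Im_le_cmod[of "t * z"] by (simp_all add: coord_dist_def)
next
  fix j assume j: "j < k"
  interpret padic_completion "F j" "av j" using padic_completion_factor[OF j] .
  have "snd (snd (T_path r s k F w)) j \<in> carrier (F j)"
    "snd (snd x) j \<ominus>\<^bsub>F j\<^esub> snd (snd y) j \<in> carrier (F j)"
    using Xset_padic[OF T_path_in_X[OF w] j] Xset_padic[OF x j] Xset_padic[OF y j] by simp_all
  then show "coord_dist F av (Padic_coord j) (aff_path k F w x) (aff_path k F w y) \<le> 2 * b"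
    using close[of "Padic_coord j"] b j aff_path_diff_padic[OF w x y j]
    by (simp add: coord_dist_def coord_abs_def set_coords av_mult)
qed

lemma Omega_subset_box:
  obtains D where "D \<ge> 0" and "\<And>j. j < n \<Longrightarrow> \<Omega> j \<subseteq> box D"
proof -
  have "\<forall>j. \<exists>D. j < n \<longrightarrow> (\<forall>x\<in>\<Omega> j. \<forall>c\<in>set (coords r s k). coord_abs av x c \<le> D)"
    using dcompact_coord_bounded compact by blast
  then obtain D where D: "\<And>j x c. j < n \<Longrightarrow> x \<in> \<Omega> j \<Longrightarrow> c \<in> set (coords r s k) \<Longrightarrow> coord_abs av x c \<le> D j"
    by metis
  define D' where "D' = (\<Sum>j<n. \<bar>D j\<bar>)"
  have "D j \<le> D'" if "j < n" for j
    using member_le_sum[of j "{..<n}" "\<lambda>j. \<bar>D j\<bar>"] that unfolding D'_def by force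
  then have "\<Omega> j \<subseteq> box D'" if "j < n" for j
    using that D Omega_subset_X unfolding box_def by (fastforce intro: order_trans)
  moreover have "D' \<ge> 0" unfolding D'_def by (simp add: sum_nonneg)
  ultimately show thesis using that by blast
qed

lemma cells_shrink:
  assumes "\<delta> > 0"
  shows "\<exists>L>0. \<forall>w\<in>Efin n G. L \<le> length w \<longrightarrow> (\<forall>x\<in>cell w. \<forall>y\<in>cell w. dist_X x y \<le> \<delta>)"
proof -
  obtain D where D: "D \<ge> 0" "\<And>j. j < n \<Longrightarrow> \<Omega> j \<subseteq> box D" using Omega_subset_box by blast
  obtain L where L: "contraction ^ L < \<delta> / (4 * D + 1)"
    using real_arch_pow_inv[of "\<delta> / (4 * D + 1)" contraction] assms D(1) contraction_less_1 by auto
  have small: "dist_X x' y' \<le> \<delta>"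
    if w: "w \<in> Efin n G" "Suc L \<le> length w" and x': "x' \<in> cell w" and y': "y' \<in> cell w" for w x' y'
  proof -
    have wE: "set w \<subseteq> E" and ne: "w \<noteq> []" using w Efin_edges by auto
    obtain x y where xy: "x \<in> box D" "y \<in> box D" "x' = aff_path k F w x" "y' = aff_path k F w y"
      using x' y' D(2)[OF Efin_etgt_last[OF w(1) ne]] unfolding cell_def by blast
    have a: "contraction ^ length w \<le> contraction ^ L"
      using w(2) contraction_nonneg contraction_less_1 by (intro power_decreasing) auto
    have "dist_X x' y' \<le> 2 * (contraction ^ L * (2 * D))"
      unfolding xy(3,4)
    proof (rule dX_aff_path_le[OF wE])
      fix c assume c: "c \<in> set (coords r s k)"
      have "coord_dist F av c x y \<le> 2 * D"
        using coord_dist_le_coord_abs[of x y c] xy(1,2) c unfolding box_def by fastforce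
      moreover have "coord_abs av (T_path r s k F w) c \<le> contraction ^ L"
        using coord_abs_T_path_le[OF wE c] a by linarith
      ultimately show "coord_abs av (T_path r s k F w) c * coord_dist F av c x y \<le> contraction ^ L * (2 * D)"
        using coord_abs_T_path_pos[OF wE c] coord_dist_nonneg[of x y c] xy(1,2) c
        by (intro mult_mono) (auto simp: box_def)
    qed (use xy D contraction_nonneg in \<open>auto simp: box_def\<close>)
    also have "\<dots> \<le> contraction ^ L * (4 * D + 1)" using contraction_nonneg by (simp add: algebra_simps)
    also have "\<dots> < \<delta>" using L D(1) by (simp add: field_simps)
    finally show ?thesis by simp
  qed
  then show ?thesis by (intro exI[of _ "Suc L"]) auto
qed

lemma cell_scale_cover:
  assumes C: "\<And>c. c \<in> set (coords r s k) \<Longrightarrow> linearly_coverable (coord_dist F av c) (box D) C"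
    and w: "w \<in> Efin n G" "w = v @ u" and \<Omega>: "\<Omega> (etgt (last w)) \<subseteq> box D" and \<beta>: "\<beta> > 0"
  shows "\<exists>Ps. cell w \<subseteq> \<Union>(set Ps) \<and> (\<forall>P\<in>set Ps. P \<subseteq> cell w \<and> (\<forall>x\<in>P. \<forall>y\<in>P. dist_X x y \<le> 2 * \<beta>))
           \<and> real (length Ps) \<le> C ^ (r + 2 * s + k)
                 * (\<Prod>c\<in>set (coords r s k). max 1 (coord_abs av (T_path r s k F v) c / \<beta>))"
proof -
  have wE: "set w \<subseteq> E" using Efin_edges w(1) by blast
  then have vE: "set v \<subseteq> E" using w(2) by auto
  obtain idx :: "'a pt \<Rightarrow> coord \<Rightarrow> int" where idx_fin: "finite (idx ` box D)"
    and idx_card: "real (card (idx ` box D)) \<le> C ^ (r + 2 * s + k)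
                 * (\<Prod>c\<in>set (coords r s k). max 1 (coord_abs av (T_path r s k F v) c / \<beta>))"
    and idx_close: "\<forall>x\<in>box D. \<forall>y\<in>box D. idx x = idx y \<longrightarrow> (\<forall>c\<in>set (coords r s k).
                      coord_abs av (T_path r s k F v) c * coord_dist F av c x y \<le> \<beta>)"
    using box_codes[where \<alpha> = "coord_abs av (T_path r s k F v)", OF C coord_abs_T_path_pos[OF vE] \<beta>]
    by blast
  define A where "A = \<Omega> (etgt (last w))"
  define V where "V = idx ` A"
  have "finite V" using finite_subset[OF image_mono[OF \<Omega>] idx_fin] unfolding V_def A_def .
  then obtain vs where vs: "set vs = V" "distinct vs" using finite_distinct_list by blast
  define Ps where "Ps = map (\<lambda>v. aff_path k F w ` {x \<in> A. idx x = v}) vs"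
  have close: "dist_X (aff_path k F w x) (aff_path k F w y) \<le> 2 * \<beta>"
    if xy: "x \<in> A" "y \<in> A" "idx x = idx y" for x y
  proof (rule dX_aff_path_le[OF wE])
    show x: "x \<in> X" and y: "y \<in> X" and "0 \<le> \<beta>" using xy \<Omega> \<beta> by (auto simp: A_def box_def)
    fix c assume c: "c \<in> set (coords r s k)"
    have "coord_abs av (T_path r s k F w) c * coord_dist F av c x y
          \<le> coord_abs av (T_path r s k F v) c * coord_dist F av c x y"
      using coord_abs_T_path_append_le[of v u c] wE w(2) c coord_dist_nonneg[OF x y c]
      by (intro mult_right_mono) auto
    also have "\<dots> \<le> \<beta>" using idx_close xy \<Omega> c unfolding A_def by blast
    finally show "coord_abs av (T_path r s k F w) c * coord_dist F av c x y \<le> \<beta>" .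
  qed
  show ?thesis
  proof (intro exI[of _ Ps] conjI)
    show "cell w \<subseteq> \<Union>(set Ps)" unfolding cell_def Ps_def A_def[symmetric] using vs(1) V_def by auto
  next
    show "\<forall>P\<in>set Ps. P \<subseteq> cell w \<and> (\<forall>x\<in>P. \<forall>y\<in>P. dist_X x y \<le> 2 * \<beta>)"
    proof
      fix P assume "P \<in> set Ps"
      then obtain v where "P = aff_path k F w ` {x \<in> A. idx x = v}" unfolding Ps_def by auto
      then show "P \<subseteq> cell w \<and> (\<forall>x\<in>P. \<forall>y\<in>P. dist_X x y \<le> 2 * \<beta>)"
        using close unfolding cell_def A_def by auto
    qed
  next
    have "length Ps = card V" unfolding Ps_def using vs distinct_card by fastforce
    also have "\<dots> \<le> card (idx ` box D)" unfolding V_def A_def using \<Omega> idx_fin by (intro card_mono) auto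
    finally show "real (length Ps) \<le> C ^ (r + 2 * s + k)
                 * (\<Prod>c\<in>set (coords r s k). max 1 (coord_abs av (T_path r s k F v) c / \<beta>))"
      using idx_card by linarith
  qed
qed

text \<open>The scale \<beta> is taken from the singular values of a prefix v of the path w: prolonging a
  path only shrinks its singular values.\<close>
lemma cell_cover:
  assumes q: "q > 0" and N: "r + 2 * s + k > 0"
  obtains K where "K \<ge> 0"
    and "\<And>w v u. w \<in> Efin n G \<Longrightarrow> w \<noteq> [] \<Longrightarrow> w = v @ u \<Longrightarrow>
           \<exists>Ps. cell w \<subseteq> \<Union>(set Ps) \<and> (\<forall>P\<in>set Ps. P \<subseteq> cell w)
              \<and> (\<Sum>P\<leftarrow>Ps. diam_pow dist_X P q) \<le> K * Phi r s k av q (T_path r s k F v)"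
proof -
  obtain D where D: "D \<ge> 0" "\<And>j. j < n \<Longrightarrow> \<Omega> j \<subseteq> box D" using Omega_subset_box by blast
  obtain C where C: "C \<ge> 1" "\<And>c. c \<in> set (coords r s k) \<Longrightarrow> linearly_coverable (coord_dist F av c) (box D) C"
    using linearly_coverable_box[OF D(1)] by blast
  define K where "K = C ^ (r + 2 * s + k) * 2 powr q"
  have K: "K \<ge> 0" using C(1) unfolding K_def by simp
  have "\<exists>Ps. cell w \<subseteq> \<Union>(set Ps) \<and> (\<forall>P\<in>set Ps. P \<subseteq> cell w)
              \<and> (\<Sum>P\<leftarrow>Ps. diam_pow dist_X P q) \<le> K * Phi r s k av q (T_path r s k F v)"
    if w: "w \<in> Efin n G" "w \<noteq> []" "w = v @ u" for w v u
  proof -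
    have vE: "set v \<subseteq> E" using Efin_edges[OF w(1)] w(3) by auto
    obtain \<beta> where \<beta>: "\<beta> > 0" "(\<Prod>c\<in>set (coords r s k). max 1 (coord_abs av (T_path r s k F v) c / \<beta>)) * \<beta> powr q
                         \<le> Phi r s k av q (T_path r s k F v)"
      using Phi_ge_covering_cost[OF q N coord_abs_T_path_pos[OF vE]] by blast
    obtain Ps where Ps_cover: "cell w \<subseteq> \<Union>(set Ps)"
      and Ps_small: "\<forall>P\<in>set Ps. P \<subseteq> cell w \<and> (\<forall>x\<in>P. \<forall>y\<in>P. dist_X x y \<le> 2 * \<beta>)"
      and Ps_len: "real (length Ps) \<le> C ^ (r + 2 * s + k)
                 * (\<Prod>c\<in>set (coords r s k). max 1 (coord_abs av (T_path r s k F v) c / \<beta>))"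
      using cell_scale_cover[OF C(2) w(1,3) D(2)[OF Efin_etgt_last[OF w(1,2)]] \<beta>(1)] by blast
    have "(\<Sum>P\<leftarrow>Ps. diam_pow dist_X P q) \<le> real (length Ps) * (2 * \<beta>) powr q"
      by (rule sum_diam_pow_le) (use q Ps_small dX_nonneg in auto)
    also have "\<dots> \<le> C ^ (r + 2 * s + k)
                 * (\<Prod>c\<in>set (coords r s k). max 1 (coord_abs av (T_path r s k F v) c / \<beta>)) * (2 * \<beta>) powr q"
      using Ps_len by (intro mult_right_mono) auto
    also have "\<dots> = K * ((\<Prod>c\<in>set (coords r s k). max 1 (coord_abs av (T_path r s k F v) c / \<beta>)) * \<beta> powr q)"
      using \<beta>(1) by (simp add: K_def powr_mult)
    also have "\<dots> \<le> K * Phi r s k av q (T_path r s k F v)" using \<beta>(2) K by (rule mult_left_mono)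
    finally show ?thesis using Ps_cover Ps_small by blast
  qed
  then show thesis by (rule that[OF K])
qed

lemma hcontent_le_cells:
  assumes q: "q > 0" and N: "r + 2 * s + k > 0"
  obtains K where "K \<ge> 0"
    and "\<And>\<delta> I p c A. (\<And>m. m \<in> I \<Longrightarrow> p m \<in> Efin n G \<and> p m \<noteq> [] \<and> (\<exists>u. p m = c m @ u)
                                  \<and> (\<forall>x\<in>cell (p m). \<forall>y\<in>cell (p m). dist_X x y \<le> \<delta>))
           \<Longrightarrow> A \<subseteq> (\<Union>m\<in>I. cell (p m))
           \<Longrightarrow> hcontent dist_X X q \<delta> A
                 \<le> ennreal K * (\<Sum>m. ennreal (if m \<in> I then Phi r s k av q (T_path r s k F (c m)) else 0))"
proof -
  obtain K where K: "K \<ge> 0" and cover: "\<And>w v u. w \<in> Efin n G \<Longrightarrow> w \<noteq> [] \<Longrightarrow> w = v @ u \<Longrightarrow>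
           \<exists>Ps. cell w \<subseteq> \<Union>(set Ps) \<and> (\<forall>P\<in>set Ps. P \<subseteq> cell w)
              \<and> (\<Sum>P\<leftarrow>Ps. diam_pow dist_X P q) \<le> K * Phi r s k av q (T_path r s k F v)"
    using cell_cover[OF q N] by blast
  have "hcontent dist_X X q \<delta> A
          \<le> ennreal K * (\<Sum>m. ennreal (if m \<in> I then Phi r s k av q (T_path r s k F (c m)) else 0))"
    if p: "\<And>m. m \<in> I \<Longrightarrow> p m \<in> Efin n G \<and> p m \<noteq> [] \<and> (\<exists>u. p m = c m @ u)
                              \<and> (\<forall>x\<in>cell (p m). \<forall>y\<in>cell (p m). dist_X x y \<le> \<delta>)"
      and A: "A \<subseteq> (\<Union>m\<in>I. cell (p m))" for \<delta> I p c A
  proof -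
    define b where "b m = (if m \<in> I then K * Phi r s k av q (T_path r s k F (c m)) else 0)" for m
    have b: "ennreal (b m) = ennreal K * ennreal (if m \<in> I then Phi r s k av q (T_path r s k F (c m)) else 0)"
      for m unfolding b_def using K by (simp add: ennreal_mult')
    have "hcontent dist_X X q \<delta> A \<le> (\<Sum>m. ennreal (b m))"
    proof (rule hcontent_le_suminf)
      show "A \<subseteq> (\<Union>m. if m \<in> I then cell (p m) else {})" using A by auto
      fix m
      show "\<exists>Ps. (if m \<in> I then cell (p m) else {}) \<subseteq> \<Union>(set Ps)
               \<and> (\<forall>P\<in>set Ps. P \<subseteq> X \<and> (\<forall>x\<in>P. \<forall>y\<in>P. dist_X x y \<le> \<delta>))
               \<and> (\<Sum>P\<leftarrow>Ps. diam_pow dist_X P q) \<le> b m"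
      proof (cases "m \<in> I")
        case True
        obtain u where pm: "p m \<in> Efin n G" "p m \<noteq> []" "p m = c m @ u"
          and small: "\<forall>x\<in>cell (p m). \<forall>y\<in>cell (p m). dist_X x y \<le> \<delta>"
          using p[OF True] by blast
        obtain Ps where Ps: "cell (p m) \<subseteq> \<Union>(set Ps)" "\<forall>P\<in>set Ps. P \<subseteq> cell (p m)"
          "(\<Sum>P\<leftarrow>Ps. diam_pow dist_X P q) \<le> K * Phi r s k av q (T_path r s k F (c m))"
          using cover[OF pm] by blast
        have "P \<subseteq> X \<and> (\<forall>x\<in>P. \<forall>y\<in>P. dist_X x y \<le> \<delta>)" if "P \<in> set Ps" for P
        proof
          have sub: "P \<subseteq> cell (p m)" using Ps(2) that by blast
          show "P \<subseteq> X" using sub cell_subset_X[OF pm(1,2)] by (rule order_trans)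
          show "\<forall>x\<in>P. \<forall>y\<in>P. dist_X x y \<le> \<delta>" using sub small by blast
        qed
        then show ?thesis using True Ps(1,3) unfolding b_def by (intro exI[of _ Ps] conjI) auto
      qed (intro exI[of _ "[]"], simp add: b_def)
    qed
    also have "(\<Sum>m. ennreal (b m))
        = ennreal K * (\<Sum>m. ennreal (if m \<in> I then Phi r s k av q (T_path r s k F (c m)) else 0))"
      by (simp only: b ennreal_suminf_cmult)
    finally show ?thesis .
  qed
  then show thesis by (rule that[OF K])
qed

lemma Einf_prefix_in_Efin: "\<omega> \<in> Einf n G \<Longrightarrow> map \<omega> [0..<l] \<in> Efin n G"
  unfolding Efin_def Einf_def by auto

lemma point_in_path_cells:
  assumes i: "i < n" and x: "x \<in> \<Omega> i"
  shows "\<exists>\<omega>\<in>Einf n G. \<forall>l>0. x \<in> cell (map \<omega> [0..<l])"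
proof -
  define P where "P p q \<longleftrightarrow> fst q \<in> E \<and> esrc (fst q) = fst p \<and> snd q \<in> \<Omega> (etgt (fst q))
                   \<and> snd p = aff_apply k F (elab (fst q)) (snd q)"
    for p :: "nat \<times> 'a pt" and q :: "'a edge \<times> 'a pt"
  have ex: "\<exists>q. P p q" if "fst p < n" "snd p \<in> \<Omega> (fst p)" for p
  proof -
    have "snd p \<in> (\<Union>j<n. \<Union>f\<in>G (fst p) j. aff_apply k F f ` \<Omega> j)" using solution that by blast
    then obtain j f y' where j: "j < n" "f \<in> G (fst p) j" "y' \<in> \<Omega> j" "snd p = aff_apply k F f y'"
      by blast
    show ?thesis
      by (rule exI[of _ "((fst p, j, f), y')"]) (use that j in \<open>simp add: P_def edges_def esrc_def etgt_def elab_def\<close>)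
  qed
  define nxt where "nxt p = (SOME q. P p q)" for p
  define st where "st m = ((\<lambda>p. (etgt (fst (nxt p)), snd (nxt p))) ^^ m) (i, x)" for m
  have st_Suc: "st (Suc m) = (etgt (fst (nxt (st m))), snd (nxt (st m)))" for m
    by (simp add: st_def)
  have inv: "fst (st m) < n \<and> snd (st m) \<in> \<Omega> (fst (st m)) \<and> P (st m) (nxt (st m))" for m
  proof (induction m)
    case 0
    have "P (st 0) (nxt (st 0))" unfolding nxt_def by (rule someI_ex, rule ex) (use i x in \<open>auto simp: st_def\<close>)
    then show ?case using i x by (simp add: st_def)
  next
    case (Suc m)
    then have "fst (st (Suc m)) < n" "snd (st (Suc m)) \<in> \<Omega> (fst (st (Suc m)))"
      using edge_etgt unfolding P_def st_Suc by auto
    moreover have "P (st (Suc m)) (nxt (st (Suc m)))"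
      unfolding nxt_def by (rule someI_ex, rule ex) (use calculation in auto)
    ultimately show ?case by simp
  qed
  define \<omega> where "\<omega> m = fst (nxt (st m))" for m
  have rep: "x = aff_path k F (map \<omega> [0..<l]) (snd (st l))" for l
  proof (induction l)
    case (Suc l)
    have "snd (st l) = aff_apply k F (elab (\<omega> l)) (snd (st (Suc l)))"
      using inv[of l] unfolding P_def \<omega>_def st_Suc by simp
    then show ?case using Suc by (simp add: aff_path_append)
  qed (simp add: st_def)
  have "\<omega> m \<in> E" "esrc (\<omega> m) = fst (st m)" for m using inv[of m] unfolding P_def \<omega>_def by simp_all
  moreover have "etgt (\<omega> m) = fst (st (Suc m))" for m unfolding \<omega>_def st_Suc by simp
  ultimately have \<omega>: "\<omega> \<in> Einf n G" unfolding Einf_def by simp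
  have "x \<in> cell (map \<omega> [0..<l])" if "l > 0" for l
  proof -
    have "etgt (last (map \<omega> [0..<l])) = fst (st l)"
      using that by (cases l) (simp_all add: \<omega>_def st_Suc)
    then show ?thesis using rep[of l] inv[of l] unfolding cell_def by auto
  qed
  then show ?thesis using \<omega> by blast
qed

lemma infinite_Efin: "n > 0 \<Longrightarrow> infinite (Efin n G)"
proof
  assume "n > 0" and fin: "finite (Efin n G)"
  obtain x where "x \<in> \<Omega> 0" using nonempty \<open>n > 0\<close> by blast
  then obtain \<omega> where \<omega>: "\<omega> \<in> Einf n G" using point_in_path_cells \<open>n > 0\<close> by blast
  define M where "M = Max (length ` Efin n G)"
  have "map \<omega> [0..<Suc M] \<in> Efin n G" using Einf_prefix_in_Efin[OF \<omega>] .
  then have "Suc M \<le> M" unfolding M_def using fin by (metis Max_ge finite_imageI image_eqI length_map length_upt minus_nat.diff_0)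
  then show False by simp
qed

text \<open>Each cylinder word of a small cylinder is prolonged to length L along a point of the
  cylinder; all points of the cylinder agree on these L letters.\<close>
lemma cylinder_cover_cells:
  assumes \<eta>: "\<eta>0 > 1" and i: "i < n" and L: "L > 0"
    and diam: "\<And>m. diam_set (dE \<eta>0) (cyl n G (c m)) \<le> \<eta>0 powr (- real L)"
    and cover: "Einf n G \<subseteq> (\<Union>m. cyl n G (c m))"
  shows "\<exists>I p. (\<forall>m\<in>I. p m \<in> Efin n G \<and> L \<le> length (p m) \<and> (\<exists>u. p m = c m @ u))
               \<and> \<Omega> i \<subseteq> (\<Union>m\<in>I. cell (p m))"
proof -
  define I where "I = {m. cyl n G (c m) \<noteq> {}}"
  define \<omega> where "\<omega> m = (SOME \<omega>. \<omega> \<in> cyl n G (c m))" for m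
  define l where "l m = max (length (c m)) L" for m
  define p where "p m = map (\<omega> m) [0..<l m]" for m
  have \<omega>_cyl: "\<omega> m \<in> cyl n G (c m)" if "m \<in> I" for m
    using that unfolding I_def \<omega>_def by (simp add: some_in_eq)
  have agree: "map \<omega>' [0..<l m] = p m" if "\<omega>' \<in> cyl n G (c m)" for \<omega>' m
  proof -
    have "m \<in> I" using that unfolding I_def by blast
    then show ?thesis unfolding p_def l_def
      using cyl_elems_agree[OF \<eta> that \<omega>_cyl diam] by (intro map_cong) auto
  qed
  have "p m \<in> Efin n G \<and> L \<le> length (p m) \<and> (\<exists>u. p m = c m @ u)" if m: "m \<in> I" for m
  proof -
    have "\<omega> m \<in> Einf n G" using \<omega>_cyl[OF m] unfolding cyl_def by simp
    then have "p m \<in> Efin n G" unfolding p_def by (rule Einf_prefix_in_Efin)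
    moreover have "take (length (c m)) (p m) = c m"
      using \<omega>_cyl[OF m] by (intro nth_equalityI) (auto simp: p_def l_def cyl_def)
    then have "p m = c m @ drop (length (c m)) (p m)" by (metis append_take_drop_id)
    ultimately show ?thesis by (auto simp: p_def l_def)
  qed
  moreover have "\<Omega> i \<subseteq> (\<Union>m\<in>I. cell (p m))"
  proof
    fix x assume "x \<in> \<Omega> i"
    then obtain \<omega>' where \<omega>': "\<omega>' \<in> Einf n G" "\<forall>l>0. x \<in> cell (map \<omega>' [0..<l])"
      using point_in_path_cells[OF i] by blast
    then obtain m where "\<omega>' \<in> cyl n G (c m)" using cover by blast
    then have m: "m \<in> I" "map \<omega>' [0..<l m] = p m" using agree unfolding I_def by auto
    have "l m > 0" using L by (simp add: l_def)
    then have "x \<in> cell (p m)" using \<omega>'(2) m(2) by metis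
    then show "x \<in> (\<Union>m\<in>I. cell (p m))" using m(1) by blast
  qed
  ultimately show ?thesis by blast
qed

lemma hausdorff_Omega_lt_top_nondegenerate:
  assumes q: "q > 0" and N: "r + 2 * s + k > 0" and i: "i < n" and \<eta>: "\<eta>0 > 1"
    and nu_fin: "nu r s k F av n G \<eta>0 q (Einf n G) < \<infinity>"
  shows "hausdorff r s k F av q (\<Omega> i) < \<infinity>"
proof (rule hcontent_le_cells[OF q N])
  fix K assume K: "K \<ge> 0"
    and bound: "\<And>\<delta> I p c A. (\<And>m. m \<in> I \<Longrightarrow> p m \<in> Efin n G \<and> p m \<noteq> [] \<and> (\<exists>u. p m = c m @ u)
                                  \<and> (\<forall>x\<in>cell (p m). \<forall>y\<in>cell (p m). dist_X x y \<le> \<delta>))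
           \<Longrightarrow> A \<subseteq> (\<Union>m\<in>I. cell (p m))
           \<Longrightarrow> hcontent dist_X X q \<delta> A
                 \<le> ennreal K * (\<Sum>m. ennreal (if m \<in> I then Phi r s k av q (T_path r s k F (c m)) else 0))"
  define B where "B = nu r s k F av n G \<eta>0 q (Einf n G) + 1"
  have nu_B: "nu r s k F av n G \<eta>0 q (Einf n G) < B"
    using nu_fin unfolding B_def by (simp add: ennreal_add_left_cancel_less[of _ 0, simplified])
  have "hcontent dist_X X q \<delta> (\<Omega> i) \<le> ennreal K * B" if \<delta>: "\<delta> > 0" for \<delta>
  proof -
    obtain L where L: "L > 0" "\<forall>w\<in>Efin n G. L \<le> length w \<longrightarrow> (\<forall>x\<in>cell w. \<forall>y\<in>cell w. dist_X x y \<le> \<delta>)"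
      using cells_shrink[OF \<delta>] by blast
    have "\<eta>0 powr (- real L) > 0" using \<eta> by simp
    then obtain c where c_diam: "\<And>m. diam_set (dE \<eta>0) (cyl n G (c m)) \<le> \<eta>0 powr (- real L)"
      and c_cover: "Einf n G \<subseteq> (\<Union>m. cyl n G (c m))"
      and c_sum: "(\<Sum>m. ennreal (Phi r s k av q (T_path r s k F (c m)))) < B"
      using nu_less_cover[OF nu_B] by metis
    obtain I p where p: "\<forall>m\<in>I. p m \<in> Efin n G \<and> L \<le> length (p m) \<and> (\<exists>u. p m = c m @ u)"
      and cover: "\<Omega> i \<subseteq> (\<Union>m\<in>I. cell (p m))"
      using cylinder_cover_cells[OF \<eta> i L(1) c_diam c_cover] by blast
    have "hcontent dist_X X q \<delta> (\<Omega> i)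
          \<le> ennreal K * (\<Sum>m. ennreal (if m \<in> I then Phi r s k av q (T_path r s k F (c m)) else 0))"
      using p L cover by (intro bound) auto
    also have "\<dots> \<le> ennreal K * (\<Sum>m. ennreal (Phi r s k av q (T_path r s k F (c m))))"
      by (intro mult_left_mono suminf_le) auto
    also have "\<dots> \<le> ennreal K * B" using c_sum by (intro mult_left_mono) auto
    finally show ?thesis .
  qed
  then have "hausdorff r s k F av q (\<Omega> i) \<le> ennreal K * B"
    unfolding hausdorff_eq_SUP_hcontent by (intro SUP_least) auto
  also have "\<dots> < \<infinity>" using nu_fin unfolding B_def by (simp add: ennreal_mult_less_top)
  finally show "hausdorff r s k F av q (\<Omega> i) < \<infinity>" .
qed

lemma Omega_subset_level_cells:
  assumes "i < n" and "l > 0"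
  shows "\<Omega> i \<subseteq> (\<Union>w\<in>{w \<in> Efin n G. length w = l}. cell w)"
proof
  fix x assume "x \<in> \<Omega> i"
  then obtain \<omega> where \<omega>: "\<omega> \<in> Einf n G" "\<forall>l>0. x \<in> cell (map \<omega> [0..<l])"
    using point_in_path_cells[OF assms(1)] by blast
  have "map \<omega> [0..<l] \<in> {w \<in> Efin n G. length w = l}" using Einf_prefix_in_Efin[OF \<omega>(1)] by simp
  moreover have "x \<in> cell (map \<omega> [0..<l])" using \<omega>(2) assms(2) by blast
  ultimately show "x \<in> (\<Union>w\<in>{w \<in> Efin n G. length w = l}. cell w)" by blast
qed

lemma hausdorff_Omega_eq_0_nondegenerate:
  assumes q: "q > 0" and N: "r + 2 * s + k > 0" and i: "i < n"
    and summable: "(\<Sum>\<^sub>\<infinity>w\<in>Efin n G. ennreal (Phi r s k av q (T_path r s k F w))) < \<infinity>"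
  shows "hausdorff r s k F av q (\<Omega> i) = 0"
proof (rule hcontent_le_cells[OF q N])
  fix K assume K: "K \<ge> 0"
    and bound: "\<And>\<delta> I p c A. (\<And>m. m \<in> I \<Longrightarrow> p m \<in> Efin n G \<and> p m \<noteq> [] \<and> (\<exists>u. p m = c m @ u)
                                  \<and> (\<forall>x\<in>cell (p m). \<forall>y\<in>cell (p m). dist_X x y \<le> \<delta>))
           \<Longrightarrow> A \<subseteq> (\<Union>m\<in>I. cell (p m))
           \<Longrightarrow> hcontent dist_X X q \<delta> A
                 \<le> ennreal K * (\<Sum>m. ennreal (if m \<in> I then Phi r s k av q (T_path r s k F (c m)) else 0))"
  define level where "level l = {w \<in> Efin n G. length w = l}" for l
  have finite_level: "finite (level l)" for l
  proof -
    have "level l \<subseteq> {w. set w \<subseteq> E \<and> length w = l}" unfolding level_def Efin_def by auto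
    then show ?thesis using finite_lists_length_eq[OF finite_E] by (rule finite_subset)
  qed
  have "hcontent dist_X X q \<delta> (\<Omega> i) \<le> 0 + ennreal e" if \<delta>: "\<delta> > 0" and e: "e > 0" for \<delta> e
  proof -
    obtain L where L: "L > 0" "\<forall>w\<in>Efin n G. L \<le> length w \<longrightarrow> (\<forall>x\<in>cell w. \<forall>y\<in>cell w. dist_X x y \<le> \<delta>)"
      using cells_shrink[OF \<delta>] by blast
    obtain l0 where l0: "\<And>l. l \<ge> l0
        \<Longrightarrow> (\<Sum>w\<in>level l. ennreal (Phi r s k av q (T_path r s k F w))) \<le> ennreal (e / (K + 1))"
      using level_sum_le_of_infsum_finite[OF summable, of "ennreal (e / (K + 1))" length] finite_level e K
      unfolding level_def by auto
    define l where "l = max l0 L"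
    obtain ws where ws: "set ws = level l" "distinct ws" using finite_distinct_list[OF finite_level] by blast
    define I where "I = {..<length ws}"
    have "l > 0" using L(1) by (simp add: l_def)
    have cover: "\<Omega> i \<subseteq> (\<Union>m\<in>I. cell (ws ! m))"
    proof
      fix x assume "x \<in> \<Omega> i"
      then obtain w where w: "w \<in> set ws" "x \<in> cell w"
        using Omega_subset_level_cells[OF i \<open>l > 0\<close>] ws(1) unfolding level_def by blast
      then obtain m where "m < length ws" "ws ! m = w" by (metis in_set_conv_nth)
      then show "x \<in> (\<Union>m\<in>I. cell (ws ! m))" using w(2) unfolding I_def by blast
    qed
    have "hcontent dist_X X q \<delta> (\<Omega> i)
          \<le> ennreal K * (\<Sum>m. ennreal (if m \<in> I then Phi r s k av q (T_path r s k F (ws ! m)) else 0))"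
    proof (rule bound[OF _ cover])
      fix m assume "m \<in> I"
      then have "ws ! m \<in> level l" using ws(1) nth_mem unfolding I_def by blast
      then show "ws ! m \<in> Efin n G \<and> ws ! m \<noteq> [] \<and> (\<exists>u. ws ! m = ws ! m @ u)
                   \<and> (\<forall>x\<in>cell (ws ! m). \<forall>y\<in>cell (ws ! m). dist_X x y \<le> \<delta>)"
        using L unfolding level_def l_def by auto
    qed
    also have "(\<Sum>m. ennreal (if m \<in> I then Phi r s k av q (T_path r s k F (ws ! m)) else 0))
             = (\<Sum>w\<in>level l. ennreal (Phi r s k av q (T_path r s k F w)))"
    proof -
      have "(\<Sum>m. ennreal (if m \<in> I then Phi r s k av q (T_path r s k F (ws ! m)) else 0))
            = (\<Sum>m<length ws. ennreal (Phi r s k av q (T_path r s k F (ws ! m))))"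
        by (subst suminf_finite[of "{..<length ws}"]) (auto simp: I_def)
      also have "\<dots> = (\<Sum>w\<in>set ws. ennreal (Phi r s k av q (T_path r s k F w)))"
        by (simp add: sum.distinct_set_conv_list[OF ws(2)] sum_list_sum_nth atLeast0LessThan)
      finally show ?thesis using ws(1) by simp
    qed
    also have "ennreal K * \<dots> \<le> ennreal K * ennreal (e / (K + 1))"
      using l0[of l] by (intro mult_left_mono) (auto simp: l_def)
    also have "\<dots> \<le> 0 + ennreal e"
      using K e by (simp add: ennreal_mult'[symmetric] field_simps ennreal_leI)
    finally show ?thesis .
  qed
  then have "hcontent dist_X X q \<delta> (\<Omega> i) = 0" if "\<delta> > 0" for \<delta>
    using ennreal_le_epsilon[of 0 "hcontent dist_X X q \<delta> (\<Omega> i)"] that by simp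
  then show "hausdorff r s k F av q (\<Omega> i) = 0" unfolding hausdorff_eq_SUP_hcontent by simp
qed

lemma hausdorff_Omega_lt_top:
  assumes q: "q \<ge> 0" and i: "i < n" and \<eta>: "\<eta>0 > 1"
    and nu_fin: "nu r s k F av n G \<eta>0 q (Einf n G) < \<infinity>"
  shows "hausdorff r s k F av q (\<Omega> i) < \<infinity>"
proof -
  have "q \<noteq> 0"
  proof
    assume "q = 0"
    then show False using nu_fin nu_zero_exponent[of r s k F av n G \<eta>0 "Einf n G"] by simp
  qed
  then have "q > 0" using q by simp
  then show ?thesis
    using hausdorff_eq_0_if_dim_0[OF _ _ Omega_subset_X[OF i]] hausdorff_Omega_lt_top_nondegenerate[OF _ _ i \<eta> nu_fin]
    by (cases "r + 2 * s + k = 0") auto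
qed

lemma dim_Hd_le_dim_aff:
  assumes i: "i < n"
  shows "dim_Hd r s k F av (\<Omega> i) \<le> dim_aff r s k F av n G"
  unfolding dim_Hd_def dim_aff_def
proof (rule Inf_superset_mono, rule subsetI)
  fix z assume "z \<in> {ereal q |q. 0 \<le> q \<and> (\<Sum>\<^sub>\<infinity>w\<in>Efin n G. ennreal (Phi r s k av q (T_path r s k F w))) < \<infinity>}"
  then obtain q where z: "z = ereal q" "q \<ge> 0"
    and summable: "(\<Sum>\<^sub>\<infinity>w\<in>Efin n G. ennreal (Phi r s k av q (T_path r s k F w))) < \<infinity>" by blast
  have "q > 0"
  proof (rule ccontr)
    assume "\<not> q > 0"
    then have "(\<Sum>\<^sub>\<infinity>w\<in>Efin n G. ennreal (Phi r s k av q (T_path r s k F w))) = \<infinity>"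
      using z(2) infinite_Efin i
      by (intro infsum_superconst_infinite_ennreal[where b = 1]) (auto simp: Phi_def)
    then show False using summable by simp
  qed
  then have "hausdorff r s k F av q (\<Omega> i) = 0"
    using hausdorff_eq_0_if_dim_0[OF _ _ Omega_subset_X[OF i]] hausdorff_Omega_eq_0_nondegenerate[OF _ _ i summable]
    by (cases "r + 2 * s + k = 0") auto
  then show "z \<in> {ereal q |q. 0 \<le> q \<and> hausdorff r s k F av q (\<Omega> i) = 0}" using z by blast
qed

end

theorem mainTheorem3:
  fixes r s k n :: nat
    and F :: "nat \<Rightarrow> 'a ring" and av :: "nat \<Rightarrow> 'a \<Rightarrow> real"
    and G :: "nat \<Rightarrow> nat \<Rightarrow> ('a pt \<times> 'a pt) set"
    and \<Omega> :: "nat \<Rightarrow> 'a pt set"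
    and \<eta>0 :: real
  assumes padic: "\<forall>j<k. is_padic_completion (F j) (av j)"
    and fin: "\<forall>i<n. \<forall>j<n. finite (G i j)"
    and maps: "\<forall>i<n. \<forall>j<n. \<forall>f\<in>G i j. lin_ok r s k F av (fst f) \<and> snd f \<in> Xset r s k F"
    and nonempty: "\<forall>i<n. \<Omega> i \<noteq> {}"
    and compact: "\<forall>i<n. dcompact r s k F av (\<Omega> i)"
    and solution: "\<forall>i<n. \<Omega> i = (\<Union>j<n. \<Union>f\<in>G i j. aff_apply k F f ` \<Omega> j)"
    and eta0: "\<eta>0 > 1"
  shows "(\<forall>q\<ge>0. nu r s k F av n G \<eta>0 q (Einf n G) < \<infinity>
                 \<longrightarrow> (\<forall>i<n. hausdorff r s k F av q (\<Omega> i) < \<infinity>))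
       \<and> (strongly_connected n G
                 \<longrightarrow> (\<forall>i<n. dim_Hd r s k F av (\<Omega> i) \<le> dim_aff r s k F av n G))"
proof -
  interpret gifs r s k F av n G \<Omega>
    using padic fin maps nonempty compact solution by unfold_locales
  show ?thesis
    using hausdorff_Omega_lt_top[OF _ _ eta0] dim_Hd_le_dim_aff by blast
qed

end
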